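(* For every bigroupoid $\mathcal B$ there exist an AU-bigroupoid $\mathcal S\mathcal B$ and weak equivalences (biequivalences) $(E,\epsilon):\mathcal S\mathcal B\to\mathcal B$ and $(S,\sigma):\mathcal B\to\mathcal S\mathcal B$.
   Context: A bigroupoid $\mathcal B$ consists of: a set $\mathcal B_0$ of 0-cells; for each $A,B$ a groupoid $\mathcal B(A,B)$ (objects: 1-cells; arrows: 2-cells); composition functors $*$; identity 1-cells $1_A$; inversion functors $(-)^*$; and natural isomorphisms $\mathbf a:(h*g)*f\Rightarrow h*(g*f)$, $\mathbf l:1_B*f\Rightarrow f$, $\mathbf r:f*1_A\Rightarrow f$, $\mathbf e:f^**f\Rightarrow 1_A$, $\mathbf i:1_B\Rightarrow f*f^*$, such that the pentagon for $\mathbf a$ commutes, $(\mathrm{id}*\mathbf l)\circ\mathbf a=\mathbf r*\mathrm{id}$, and $\mathbf r_f\circ(\mathrm{id}*\mathbf e_f)\circ\mathbf a\circ(\mathbf i_f*\mathrm{id})=\mathbf l_f$. An AU-bigroupoid is a bigroupoid in which $\mathbf a,\mathbf l,\mathbf r$ are identities. A morphism $(F,\phi):\mathcal A\to\mathcal B$ consists of a function on 0-cells, functors $F_{A,A'}:\mathcal A(A,A')\to\mathcal B(FA,FA')$ and natural isomorphisms $\phi_{g,f}:Fg*Ff\Rightarrow F(g*f)$, $\phi_A:1_{FA}\Rightarrow F1_A$, $\phi_f:(Ff)^*\Rightarrow F(f^* )$ satisfying $F\mathbf a\circ\phi\circ(\phi*\mathrm{id})=\phi\circ(\mathrm{id}*\phi)\circ\mathbf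 a$, $F\mathbf r\circ\phi\circ(\mathrm{id}*\phi_A)=\mathbf r$, $F\mathbf l\circ\phi\circ(\phi_B*\mathrm{id})=\mathbf l$, $F\mathbf e\circ\phi\circ(\phi_f*\mathrm{id})=\phi_A\circ\mathbf e$, $F\mathbf i\circ\phi_B=\phi\circ(\mathrm{id}*\phi_f)\circ\mathbf i$. A weak equivalence (biequivalence) $F:\mathcal A\to\mathcal B$ is a morphism such that every 0-cell $B$ of $\mathcal B$ admits a 1-cell $B\to FA'$ for some 0-cell $A'$ of $\mathcal A$, and each $F_{A,A'}$ is an equivalence of categories. *)

theory Defs
  imports Main
begin

text \<open>The hom-groupoid
B(X,Y) has objects hom B X Y and arrows hom2 B f g.  Operations are total HOL
functions; only their values on the relevant carriers matter.\<close>

record ('o,'a,'b) bigroupoid =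
  Obj :: "'o set"
  Arr :: "'a set"
  src :: "'a \<Rightarrow> 'o"
  tgt :: "'a \<Rightarrow> 'o"
  Cell :: "'b set"
  dom2 :: "'b \<Rightarrow> 'a"
  cod2 :: "'b \<Rightarrow> 'a"
  vcomp :: "'b \<Rightarrow> 'b \<Rightarrow> 'b"   (* vcomp B beta alpha = beta o alpha *)
  vid :: "'a \<Rightarrow> 'b"
  hcomp :: "'a \<Rightarrow> 'a \<Rightarrow> 'a"    (* hcomp B g f = g * f *)
  hcomp2 :: "'b \<Rightarrow> 'b \<Rightarrow> 'b"   (* hcomp2 B beta alpha = beta * alpha *)
  idn :: "'o \<Rightarrow> 'a"
  rinv :: "'a \<Rightarrow> 'a"
  rinv2 :: "'b \<Rightarrow> 'b"
  asc :: "'a \<Rightarrow> 'a \<Rightarrow> 'a \<Rightarrow> 'b"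
  lun :: "'a \<Rightarrow> 'b"
  run :: "'a \<Rightarrow> 'b"
  eps :: "'a \<Rightarrow> 'b"
  eta :: "'a \<Rightarrow> 'b"

definition hom :: "('o,'a,'b) bigroupoid \<Rightarrow> 'o \<Rightarrow> 'o \<Rightarrow> 'a set" where
  "hom B X Y = {f \<in> Arr B. src B f = X \<and> tgt B f = Y}"

definition hom2 :: "('o,'a,'b) bigroupoid \<Rightarrow> 'a \<Rightarrow> 'a \<Rightarrow> 'b set" where
  "hom2 B f g = {\<alpha> \<in> Cell B. dom2 B \<alpha> = f \<and> cod2 B \<alpha> = g}"

definition bigroupoid :: "('o,'a,'b) bigroupoid \<Rightarrow> bool" where
  "bigroupoid B \<longleftrightarrow>
    \<comment> \<open>well-formedness of cells\<close>
    (\<forall>f\<in>Arr B. src B f \<in> Obj B \<and> tgt B f \<in> Obj B) \<and>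
    (\<forall>\<alpha>\<in>Cell B. dom2 B \<alpha> \<in> Arr B \<and> cod2 B \<alpha> \<in> Arr B \<and>
        src B (dom2 B \<alpha>) = src B (cod2 B \<alpha>) \<and> tgt B (dom2 B \<alpha>) = tgt B (cod2 B \<alpha>)) \<and>
    \<comment> \<open>each B(X,Y) is a groupoid\<close>
    (\<forall>f\<in>Arr B. vid B f \<in> hom2 B f f) \<and>
    (\<forall>f g h \<alpha> \<beta>. \<alpha> \<in> hom2 B f g \<longrightarrow> \<beta> \<in> hom2 B g h \<longrightarrow> vcomp B \<beta> \<alpha> \<in> hom2 B f h) \<and>
    (\<forall>f g h k \<alpha> \<beta> \<gamma>. \<alpha> \<in> hom2 B f g \<longrightarrow> \<beta> \<in> hom2 B g h \<longrightarrow> \<gamma> \<in> hom2 B h k \<longrightarrow>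
        vcomp B \<gamma> (vcomp B \<beta> \<alpha>) = vcomp B (vcomp B \<gamma> \<beta>) \<alpha>) \<and>
    (\<forall>f g \<alpha>. \<alpha> \<in> hom2 B f g \<longrightarrow> vcomp B (vid B g) \<alpha> = \<alpha> \<and> vcomp B \<alpha> (vid B f) = \<alpha>) \<and>
    (\<forall>f g \<alpha>. \<alpha> \<in> hom2 B f g \<longrightarrow>
        (\<exists>\<beta>\<in>hom2 B g f. vcomp B \<beta> \<alpha> = vid B f \<and> vcomp B \<alpha> \<beta> = vid B g)) \<and>
    \<comment> \<open>composition functors B(Y,Z) x B(X,Y) -> B(X,Z)\<close>
    (\<forall>X Y Z f g. f \<in> hom B X Y \<longrightarrow> g \<in> hom B Y Z \<longrightarrow> hcomp B g f \<in> hom B X Z) \<and>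
    (\<forall>f f' g g' \<alpha> \<beta>. \<alpha> \<in> hom2 B f f' \<longrightarrow> \<beta> \<in> hom2 B g g' \<longrightarrow> tgt B f = src B g \<longrightarrow>
        hcomp2 B \<beta> \<alpha> \<in> hom2 B (hcomp B g f) (hcomp B g' f')) \<and>
    (\<forall>f g. f \<in> Arr B \<longrightarrow> g \<in> Arr B \<longrightarrow> tgt B f = src B g \<longrightarrow>
        hcomp2 B (vid B g) (vid B f) = vid B (hcomp B g f)) \<and>
    (\<forall>f f' f'' g g' g'' \<alpha> \<alpha>' \<beta> \<beta>'. \<alpha> \<in> hom2 B f f' \<longrightarrow> \<alpha>' \<in> hom2 B f' f'' \<longrightarrow>
        \<beta> \<in> hom2 B g g' \<longrightarrow> \<beta>' \<in> hom2 B g' g'' \<longrightarrow> tgt B f = src B g \<longrightarrow>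
        hcomp2 B (vcomp B \<beta>' \<beta>) (vcomp B \<alpha>' \<alpha>) = vcomp B (hcomp2 B \<beta>' \<alpha>') (hcomp2 B \<beta> \<alpha>)) \<and>
    \<comment> \<open>identity 1-cells\<close>
    (\<forall>X\<in>Obj B. idn B X \<in> hom B X X) \<and>
    \<comment> \<open>inversion functors B(X,Y) -> B(Y,X)\<close>
    (\<forall>X Y f. f \<in> hom B X Y \<longrightarrow> rinv B f \<in> hom B Y X) \<and>
    (\<forall>f g \<alpha>. \<alpha> \<in> hom2 B f g \<longrightarrow> rinv2 B \<alpha> \<in> hom2 B (rinv B f) (rinv B g)) \<and>
    (\<forall>f\<in>Arr B. rinv2 B (vid B f) = vid B (rinv B f)) \<and>
    (\<forall>f g h \<alpha> \<beta>. \<alpha> \<in> hom2 B f g \<longrightarrow> \<beta> \<in> hom2 B g h \<longrightarrow>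
        rinv2 B (vcomp B \<beta> \<alpha>) = vcomp B (rinv2 B \<beta>) (rinv2 B \<alpha>)) \<and>
    \<comment> \<open>associator a : (h*g)*f => h*(g*f), natural\<close>
    (\<forall>f g h. f \<in> Arr B \<longrightarrow> g \<in> Arr B \<longrightarrow> h \<in> Arr B \<longrightarrow> tgt B f = src B g \<longrightarrow> tgt B g = src B h \<longrightarrow>
        asc B h g f \<in> hom2 B (hcomp B (hcomp B h g) f) (hcomp B h (hcomp B g f))) \<and>
    (\<forall>f f' g g' h h' \<alpha> \<beta> \<gamma>. \<alpha> \<in> hom2 B f f' \<longrightarrow> \<beta> \<in> hom2 B g g' \<longrightarrow> \<gamma> \<in> hom2 B h h' \<longrightarrow>
        tgt B f = src B g \<longrightarrow> tgt B g = src B h \<longrightarrow>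
        vcomp B (asc B h' g' f') (hcomp2 B (hcomp2 B \<gamma> \<beta>) \<alpha>)
          = vcomp B (hcomp2 B \<gamma> (hcomp2 B \<beta> \<alpha>)) (asc B h g f)) \<and>
    \<comment> \<open>left unitor l : 1_Y * f => f, natural\<close>
    (\<forall>f\<in>Arr B. lun B f \<in> hom2 B (hcomp B (idn B (tgt B f)) f) f) \<and>
    (\<forall>f g \<alpha>. \<alpha> \<in> hom2 B f g \<longrightarrow>
        vcomp B \<alpha> (lun B f) = vcomp B (lun B g) (hcomp2 B (vid B (idn B (tgt B f))) \<alpha>)) \<and>
    \<comment> \<open>right unitor r : f * 1_X => f, natural\<close>
    (\<forall>f\<in>Arr B. run B f \<in> hom2 B (hcomp B f (idn B (src B f))) f) \<and>
    (\<forall>f g \<alpha>. \<alpha> \<in> hom2 B f g \<longrightarrow>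
        vcomp B \<alpha> (run B f) = vcomp B (run B g) (hcomp2 B \<alpha> (vid B (idn B (src B f))))) \<and>
    \<comment> \<open>e : f^star * f => 1_X, natural\<close>
    (\<forall>f\<in>Arr B. eps B f \<in> hom2 B (hcomp B (rinv B f) f) (idn B (src B f))) \<and>
    (\<forall>f g \<alpha>. \<alpha> \<in> hom2 B f g \<longrightarrow> vcomp B (eps B g) (hcomp2 B (rinv2 B \<alpha>) \<alpha>) = eps B f) \<and>
    \<comment> \<open>i : 1_Y => f * f^star, natural\<close>
    (\<forall>f\<in>Arr B. eta B f \<in> hom2 B (idn B (tgt B f)) (hcomp B f (rinv B f))) \<and>
    (\<forall>f g \<alpha>. \<alpha> \<in> hom2 B f g \<longrightarrow> vcomp B (hcomp2 B \<alpha> (rinv2 B \<alpha>)) (eta B f) = eta B g) \<and>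
    \<comment> \<open>pentagon\<close>
    (\<forall>f g h k. f \<in> Arr B \<longrightarrow> g \<in> Arr B \<longrightarrow> h \<in> Arr B \<longrightarrow> k \<in> Arr B \<longrightarrow>
        tgt B f = src B g \<longrightarrow> tgt B g = src B h \<longrightarrow> tgt B h = src B k \<longrightarrow>
        vcomp B (asc B k h (hcomp B g f)) (asc B (hcomp B k h) g f)
          = vcomp B (hcomp2 B (vid B k) (asc B h g f))
              (vcomp B (asc B k (hcomp B h g) f) (hcomp2 B (asc B k h g) (vid B f)))) \<and>
    \<comment> \<open>(id * l) o a = r * id\<close>
    (\<forall>f g. f \<in> Arr B \<longrightarrow> g \<in> Arr B \<longrightarrow> tgt B f = src B g \<longrightarrow>
        vcomp B (hcomp2 B (vid B g) (lun B f)) (asc B g (idn B (tgt B f)) f)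
          = hcomp2 B (run B g) (vid B f)) \<and>
    \<comment> \<open>r_f o (id * e_f) o a o (i_f * id) = l_f\<close>
    (\<forall>f\<in>Arr B. vcomp B (run B f) (vcomp B (hcomp2 B (vid B f) (eps B f))
        (vcomp B (asc B f (rinv B f) f) (hcomp2 B (eta B f) (vid B f)))) = lun B f)"

definition au_bigroupoid :: "('o,'a,'b) bigroupoid \<Rightarrow> bool" where
  "au_bigroupoid B \<longleftrightarrow> bigroupoid B \<and>
    (\<forall>f g h. f \<in> Arr B \<longrightarrow> g \<in> Arr B \<longrightarrow> h \<in> Arr B \<longrightarrow> tgt B f = src B g \<longrightarrow> tgt B g = src B h \<longrightarrow>
        asc B h g f = vid B (hcomp B (hcomp B h g) f)) \<and>
    (\<forall>f\<in>Arr B. lun B f = vid B f \<and> run B f = vid B f)"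

record ('o,'a,'b,'p,'c,'d) bmorph =
  F0 :: "'o \<Rightarrow> 'p"
  F1 :: "'a \<Rightarrow> 'c"
  F2 :: "'b \<Rightarrow> 'd"
  phi :: "'a \<Rightarrow> 'a \<Rightarrow> 'd"
  phi0 :: "'o \<Rightarrow> 'd"
  phiI :: "'a \<Rightarrow> 'd"

definition bmorphism ::
  "('o,'a,'b) bigroupoid \<Rightarrow> ('p,'c,'d) bigroupoid \<Rightarrow> ('o,'a,'b,'p,'c,'d) bmorph \<Rightarrow> bool" where
  "bmorphism A B F \<longleftrightarrow>
    (\<forall>X\<in>Obj A. F0 F X \<in> Obj B) \<and>
    \<comment> \<open>functors F_{X,X'} : A(X,X') -> B(FX,FX')\<close>
    (\<forall>X Y f. f \<in> hom A X Y \<longrightarrow> F1 F f \<in> hom B (F0 F X) (F0 F Y)) \<and>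
    (\<forall>f g \<alpha>. \<alpha> \<in> hom2 A f g \<longrightarrow> F2 F \<alpha> \<in> hom2 B (F1 F f) (F1 F g)) \<and>
    (\<forall>f\<in>Arr A. F2 F (vid A f) = vid B (F1 F f)) \<and>
    (\<forall>f g h \<alpha> \<beta>. \<alpha> \<in> hom2 A f g \<longrightarrow> \<beta> \<in> hom2 A g h \<longrightarrow>
        F2 F (vcomp A \<beta> \<alpha>) = vcomp B (F2 F \<beta>) (F2 F \<alpha>)) \<and>
    \<comment> \<open>phi_{g,f}, natural\<close>
    (\<forall>f g. f \<in> Arr A \<longrightarrow> g \<in> Arr A \<longrightarrow> tgt A f = src A g \<longrightarrow>
        phi F g f \<in> hom2 B (hcomp B (F1 F g) (F1 F f)) (F1 F (hcomp A g f))) \<and>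
    (\<forall>f f' g g' \<alpha> \<beta>. \<alpha> \<in> hom2 A f f' \<longrightarrow> \<beta> \<in> hom2 A g g' \<longrightarrow> tgt A f = src A g \<longrightarrow>
        vcomp B (F2 F (hcomp2 A \<beta> \<alpha>)) (phi F g f) = vcomp B (phi F g' f') (hcomp2 B (F2 F \<beta>) (F2 F \<alpha>))) \<and>
    \<comment> \<open>phi_X\<close>
    (\<forall>X\<in>Obj A. phi0 F X \<in> hom2 B (idn B (F0 F X)) (F1 F (idn A X))) \<and>
    \<comment> \<open>phi_f, natural\<close>
    (\<forall>f\<in>Arr A. phiI F f \<in> hom2 B (rinv B (F1 F f)) (F1 F (rinv A f))) \<and>
    (\<forall>f g \<alpha>. \<alpha> \<in> hom2 A f g \<longrightarrow>
        vcomp B (F2 F (rinv2 A \<alpha>)) (phiI F f) = vcomp B (phiI F g) (rinv2 B (F2 F \<alpha>))) \<and>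
    \<comment> \<open>F a o phi o (phi * id) = phi o (id * phi) o a\<close>
    (\<forall>f g h. f \<in> Arr A \<longrightarrow> g \<in> Arr A \<longrightarrow> h \<in> Arr A \<longrightarrow> tgt A f = src A g \<longrightarrow> tgt A g = src A h \<longrightarrow>
        vcomp B (F2 F (asc A h g f))
          (vcomp B (phi F (hcomp A h g) f) (hcomp2 B (phi F h g) (vid B (F1 F f))))
        = vcomp B (phi F h (hcomp A g f))
          (vcomp B (hcomp2 B (vid B (F1 F h)) (phi F g f)) (asc B (F1 F h) (F1 F g) (F1 F f)))) \<and>
    \<comment> \<open>F r o phi o (id * phi_X) = r\<close>
    (\<forall>f\<in>Arr A. vcomp B (F2 F (run A f))
        (vcomp B (phi F f (idn A (src A f))) (hcomp2 B (vid B (F1 F f)) (phi0 F (src A f))))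
        = run B (F1 F f)) \<and>
    \<comment> \<open>F l o phi o (phi_Y * id) = l\<close>
    (\<forall>f\<in>Arr A. vcomp B (F2 F (lun A f))
        (vcomp B (phi F (idn A (tgt A f)) f) (hcomp2 B (phi0 F (tgt A f)) (vid B (F1 F f))))
        = lun B (F1 F f)) \<and>
    \<comment> \<open>F e o phi o (phi_f * id) = phi_X o e\<close>
    (\<forall>f\<in>Arr A. vcomp B (F2 F (eps A f))
        (vcomp B (phi F (rinv A f) f) (hcomp2 B (phiI F f) (vid B (F1 F f))))
        = vcomp B (phi0 F (src A f)) (eps B (F1 F f))) \<and>
    \<comment> \<open>F i o phi_Y = phi o (id * phi_f) o i\<close>
    (\<forall>f\<in>Arr A. vcomp B (F2 F (eta A f)) (phi0 F (tgt A f))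
        = vcomp B (phi F f (rinv A f))
            (vcomp B (hcomp2 B (vid B (F1 F f)) (phiI F f)) (eta B (F1 F f))))"

text \<open>F_{X,X'} : A(X,X') -> B(FX,FX') is an equivalence of categories: there is a functor
G back and natural transformations (automatically isomorphisms, since all 2-cells are
invertible) eta : Id => G F and eps : F G => Id.\<close>

definition hom_equivalence ::
  "('o,'a,'b) bigroupoid \<Rightarrow> ('p,'c,'d) bigroupoid \<Rightarrow> ('o,'a,'b,'p,'c,'d) bmorph \<Rightarrow> 'o \<Rightarrow> 'o \<Rightarrow> bool" where
  "hom_equivalence A B F X X' \<longleftrightarrow>
    (\<exists>(G1 :: 'c \<Rightarrow> 'a) (G2 :: 'd \<Rightarrow> 'b) (u :: 'a \<Rightarrow> 'b) (c :: 'c \<Rightarrow> 'd).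
      (\<forall>h\<in>hom B (F0 F X) (F0 F X'). G1 h \<in> hom A X X') \<and>
      (\<forall>h h' \<gamma>. h \<in> hom B (F0 F X) (F0 F X') \<longrightarrow> \<gamma> \<in> hom2 B h h' \<longrightarrow>
          G2 \<gamma> \<in> hom2 A (G1 h) (G1 h')) \<and>
      (\<forall>h\<in>hom B (F0 F X) (F0 F X'). G2 (vid B h) = vid A (G1 h)) \<and>
      (\<forall>h h' h'' \<gamma> \<delta>. h \<in> hom B (F0 F X) (F0 F X') \<longrightarrow> \<gamma> \<in> hom2 B h h' \<longrightarrow> \<delta> \<in> hom2 B h' h'' \<longrightarrow>
          G2 (vcomp B \<delta> \<gamma>) = vcomp A (G2 \<delta>) (G2 \<gamma>)) \<and>
      (\<forall>f\<in>hom A X X'. u f \<in> hom2 A f (G1 (F1 F f))) \<and>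
      (\<forall>f g \<alpha>. f \<in> hom A X X' \<longrightarrow> \<alpha> \<in> hom2 A f g \<longrightarrow>
          vcomp A (G2 (F2 F \<alpha>)) (u f) = vcomp A (u g) \<alpha>) \<and>
      (\<forall>h\<in>hom B (F0 F X) (F0 F X'). c h \<in> hom2 B (F1 F (G1 h)) h) \<and>
      (\<forall>h h' \<gamma>. h \<in> hom B (F0 F X) (F0 F X') \<longrightarrow> \<gamma> \<in> hom2 B h h' \<longrightarrow>
          vcomp B \<gamma> (c h) = vcomp B (c h') (F2 F (G2 \<gamma>))))"

definition weak_equivalence ::
  "('o,'a,'b) bigroupoid \<Rightarrow> ('p,'c,'d) bigroupoid \<Rightarrow> ('o,'a,'b,'p,'c,'d) bmorph \<Rightarrow> bool" where
  "weak_equivalence A B F \<longleftrightarrow> bmorphism A B F \<and>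
    (\<forall>Y\<in>Obj B. \<exists>X\<in>Obj A. hom B Y (F0 F X) \<noteq> {}) \<and>
    (\<forall>X\<in>Obj A. \<forall>X'\<in>Obj A. hom_equivalence A B F X X')"

end

theory Submission
  imports Defs
begin

text \<open>The strictification \<open>SB\<close> has the 0-cells of \<open>B\<close>; its 1-cells are composable words in the
  1-cells of \<open>B\<close> and their formal inverses, and its 2-cells between two parallel words are the
  2-cells of \<open>B\<close> between their evaluations. Composition of 1-cells is concatenation, which is
  strictly associative and unital, so associator and unitors of \<open>SB\<close> are identities. Horizontal
  composition of 2-cells is that of \<open>B\<close> conjugated by the canonical comparison cells
  \<open>eval (v @ w) \<Rightarrow> eval w * eval v\<close>; that \<open>SB\<close> is a bigroupoid rests on the coherence of these cells,
  which follows from the pentagon and triangle axioms via Kelly's lemmas. Evaluation \<open>SB \<rightarrow> B\<close> and the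
  inclusion of one-letter words \<open>B \<rightarrow> SB\<close> are the identity on 0-cells and equivalences on each
  hom-groupoid, with quasi-inverses given by the other map.\<close>

type_synonym ('o, 'a) word_arr = "'o \<times> ('a \<times> bool) list \<times> 'o"
type_synonym ('o, 'a, 'b) word_cell = "('o, 'a) word_arr \<times> 'b \<times> ('o, 'a) word_arr"

locale bigroupoid_context =
  fixes B :: "('o,'a,'b) bigroupoid"
  assumes arr_src_tgt_obj: "\<And>f. f \<in> Arr B \<Longrightarrow> src B f \<in> Obj B \<and> tgt B f \<in> Obj B"
    and cell_dom_cod_parallel: "\<And>\<alpha>. \<alpha> \<in> Cell B \<Longrightarrow> dom2 B \<alpha> \<in> Arr B \<and> cod2 B \<alpha> \<in> Arr B \<and>
        src B (dom2 B \<alpha>) = src B (cod2 B \<alpha>) \<and> tgt B (dom2 B \<alpha>) = tgt B (cod2 B \<alpha>)"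
    and vid_hom2: "\<And>f. f \<in> Arr B \<Longrightarrow> vid B f \<in> hom2 B f f"
    and vcomp_hom2: "\<And>f g h \<alpha> \<beta>. \<alpha> \<in> hom2 B f g \<Longrightarrow> \<beta> \<in> hom2 B g h \<Longrightarrow> vcomp B \<beta> \<alpha> \<in> hom2 B f h"
    and vcomp_assoc_hom2: "\<And>f g h k \<alpha> \<beta> \<gamma>. \<alpha> \<in> hom2 B f g \<Longrightarrow> \<beta> \<in> hom2 B g h \<Longrightarrow> \<gamma> \<in> hom2 B h k \<Longrightarrow>
        vcomp B \<gamma> (vcomp B \<beta> \<alpha>) = vcomp B (vcomp B \<gamma> \<beta>) \<alpha>"
    and vcomp_vid_hom2: "\<And>f g \<alpha>. \<alpha> \<in> hom2 B f g \<Longrightarrow> vcomp B (vid B g) \<alpha> = \<alpha> \<and> vcomp B \<alpha> (vid B f) = \<alpha>"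
    and vinverse_ex_hom2: "\<And>f g \<alpha>. \<alpha> \<in> hom2 B f g \<Longrightarrow>
        \<exists>\<beta>\<in>hom2 B g f. vcomp B \<beta> \<alpha> = vid B f \<and> vcomp B \<alpha> \<beta> = vid B g"
    and hcomp_hom: "\<And>X Y Z f g. f \<in> hom B X Y \<Longrightarrow> g \<in> hom B Y Z \<Longrightarrow> hcomp B g f \<in> hom B X Z"
    and hcomp2_hom2: "\<And>f f' g g' \<alpha> \<beta>. \<alpha> \<in> hom2 B f f' \<Longrightarrow> \<beta> \<in> hom2 B g g' \<Longrightarrow> tgt B f = src B g \<Longrightarrow>
        hcomp2 B \<beta> \<alpha> \<in> hom2 B (hcomp B g f) (hcomp B g' f')"
    and hcomp2_vid: "\<And>f g. f \<in> Arr B \<Longrightarrow> g \<in> Arr B \<Longrightarrow> tgt B f = src B g \<Longrightarrow>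
        hcomp2 B (vid B g) (vid B f) = vid B (hcomp B g f)"
    and interchange_hom2: "\<And>f f' f'' g g' g'' \<alpha> \<alpha>' \<beta> \<beta>'. \<alpha> \<in> hom2 B f f' \<Longrightarrow> \<alpha>' \<in> hom2 B f' f'' \<Longrightarrow>
        \<beta> \<in> hom2 B g g' \<Longrightarrow> \<beta>' \<in> hom2 B g' g'' \<Longrightarrow> tgt B f = src B g \<Longrightarrow>
        hcomp2 B (vcomp B \<beta>' \<beta>) (vcomp B \<alpha>' \<alpha>) = vcomp B (hcomp2 B \<beta>' \<alpha>') (hcomp2 B \<beta> \<alpha>)"
    and idn_hom: "\<And>X. X \<in> Obj B \<Longrightarrow> idn B X \<in> hom B X X"
    and rinv_hom: "\<And>X Y f. f \<in> hom B X Y \<Longrightarrow> rinv B f \<in> hom B Y X"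
    and rinv2_hom2: "\<And>f g \<alpha>. \<alpha> \<in> hom2 B f g \<Longrightarrow> rinv2 B \<alpha> \<in> hom2 B (rinv B f) (rinv B g)"
    and rinv2_vid: "\<And>f. f \<in> Arr B \<Longrightarrow> rinv2 B (vid B f) = vid B (rinv B f)"
    and rinv2_vcomp_hom2: "\<And>f g h \<alpha> \<beta>. \<alpha> \<in> hom2 B f g \<Longrightarrow> \<beta> \<in> hom2 B g h \<Longrightarrow>
        rinv2 B (vcomp B \<beta> \<alpha>) = vcomp B (rinv2 B \<beta>) (rinv2 B \<alpha>)"
    and asc_hom2: "\<And>f g h. f \<in> Arr B \<Longrightarrow> g \<in> Arr B \<Longrightarrow> h \<in> Arr B \<Longrightarrow> tgt B f = src B g \<Longrightarrow> tgt B g = src B h \<Longrightarrow>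
        asc B h g f \<in> hom2 B (hcomp B (hcomp B h g) f) (hcomp B h (hcomp B g f))"
    and asc_natural_hom2: "\<And>f f' g g' h h' \<alpha> \<beta> \<gamma>. \<alpha> \<in> hom2 B f f' \<Longrightarrow> \<beta> \<in> hom2 B g g' \<Longrightarrow> \<gamma> \<in> hom2 B h h' \<Longrightarrow>
        tgt B f = src B g \<Longrightarrow> tgt B g = src B h \<Longrightarrow>
        vcomp B (asc B h' g' f') (hcomp2 B (hcomp2 B \<gamma> \<beta>) \<alpha>)
          = vcomp B (hcomp2 B \<gamma> (hcomp2 B \<beta> \<alpha>)) (asc B h g f)"
    and lun_hom2: "\<And>f. f \<in> Arr B \<Longrightarrow> lun B f \<in> hom2 B (hcomp B (idn B (tgt B f)) f) f"
    and lun_natural_hom2: "\<And>f g \<alpha>. \<alpha> \<in> hom2 B f g \<Longrightarrow>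
        vcomp B \<alpha> (lun B f) = vcomp B (lun B g) (hcomp2 B (vid B (idn B (tgt B f))) \<alpha>)"
    and run_hom2: "\<And>f. f \<in> Arr B \<Longrightarrow> run B f \<in> hom2 B (hcomp B f (idn B (src B f))) f"
    and run_natural_hom2: "\<And>f g \<alpha>. \<alpha> \<in> hom2 B f g \<Longrightarrow>
        vcomp B \<alpha> (run B f) = vcomp B (run B g) (hcomp2 B \<alpha> (vid B (idn B (src B f))))"
    and eps_hom2: "\<And>f. f \<in> Arr B \<Longrightarrow> eps B f \<in> hom2 B (hcomp B (rinv B f) f) (idn B (src B f))"
    and eps_natural_hom2: "\<And>f g \<alpha>. \<alpha> \<in> hom2 B f g \<Longrightarrow> vcomp B (eps B g) (hcomp2 B (rinv2 B \<alpha>) \<alpha>) = eps B f"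
    and eta_hom2: "\<And>f. f \<in> Arr B \<Longrightarrow> eta B f \<in> hom2 B (idn B (tgt B f)) (hcomp B f (rinv B f))"
    and eta_natural_hom2: "\<And>f g \<alpha>. \<alpha> \<in> hom2 B f g \<Longrightarrow> vcomp B (hcomp2 B \<alpha> (rinv2 B \<alpha>)) (eta B f) = eta B g"
    and pentagon: "\<And>f g h k. f \<in> Arr B \<Longrightarrow> g \<in> Arr B \<Longrightarrow> h \<in> Arr B \<Longrightarrow> k \<in> Arr B \<Longrightarrow>
        tgt B f = src B g \<Longrightarrow> tgt B g = src B h \<Longrightarrow> tgt B h = src B k \<Longrightarrow>
        vcomp B (asc B k h (hcomp B g f)) (asc B (hcomp B k h) g f)
          = vcomp B (hcomp2 B (vid B k) (asc B h g f))
              (vcomp B (asc B k (hcomp B h g) f) (hcomp2 B (asc B k h g) (vid B f)))"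
    and triangle: "\<And>f g. f \<in> Arr B \<Longrightarrow> g \<in> Arr B \<Longrightarrow> tgt B f = src B g \<Longrightarrow>
        vcomp B (hcomp2 B (vid B g) (lun B f)) (asc B g (idn B (tgt B f)) f)
          = hcomp2 B (run B g) (vid B f)"
    and zigzag: "\<And>f. f \<in> Arr B \<Longrightarrow> vcomp B (run B f) (vcomp B (hcomp2 B (vid B f) (eps B f))
        (vcomp B (asc B f (rinv B f) f) (hcomp2 B (eta B f) (vid B f)))) = lun B f"

lemma bigroupoid_context_iff: "bigroupoid_context B \<longleftrightarrow> bigroupoid B"
  unfolding bigroupoid_def bigroupoid_context_def Ball_def Bex_def
  by (rule iffI; elim conjE; intro conjI; assumption)

context bigroupoid_context
begin

abbreviation "V \<equiv> vcomp B"
abbreviation "H \<equiv> hcomp2 B"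
abbreviation "I \<equiv> vid B"
abbreviation "hc \<equiv> hcomp B"
abbreviation "d2 \<equiv> dom2 B"
abbreviation "c2 \<equiv> cod2 B"
abbreviation "s \<equiv> src B"
abbreviation "t \<equiv> tgt B"

declare hcomp2_vid[simp] rinv2_vid[simp]

lemma hom2_iff: "\<alpha> \<in> hom2 B f g \<longleftrightarrow> \<alpha> \<in> Cell B \<and> d2 \<alpha> = f \<and> c2 \<alpha> = g" by (auto simp: hom2_def)
lemma hom_iff: "f \<in> hom B X Y \<longleftrightarrow> f \<in> Arr B \<and> s f = X \<and> t f = Y" by (auto simp: hom_def)

lemma dom2_arr[simp]: "\<alpha> \<in> Cell B \<Longrightarrow> d2 \<alpha> \<in> Arr B"
  and cod2_arr[simp]: "\<alpha> \<in> Cell B \<Longrightarrow> c2 \<alpha> \<in> Arr B"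
  using cell_dom_cod_parallel by blast+
lemma src_cod2[simp]: "\<alpha> \<in> Cell B \<Longrightarrow> s (c2 \<alpha>) = s (d2 \<alpha>)"
  and tgt_cod2[simp]: "\<alpha> \<in> Cell B \<Longrightarrow> t (c2 \<alpha>) = t (d2 \<alpha>)"
  using cell_dom_cod_parallel by metis+
lemma src_arr_obj[simp]: "f \<in> Arr B \<Longrightarrow> s f \<in> Obj B"
  and tgt_arr_obj[simp]: "f \<in> Arr B \<Longrightarrow> t f \<in> Obj B"
  using arr_src_tgt_obj by blast+

lemma vid_cell[simp]: "f \<in> Arr B \<Longrightarrow> I f \<in> Cell B"
  and dom2_vid[simp]: "f \<in> Arr B \<Longrightarrow> d2 (I f) = f"
  and cod2_vid[simp]: "f \<in> Arr B \<Longrightarrow> c2 (I f) = f"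
  using vid_hom2 hom2_iff by blast+

lemma vcomp_cell[simp]: "\<alpha> \<in> Cell B \<Longrightarrow> \<beta> \<in> Cell B \<Longrightarrow> d2 \<beta> = c2 \<alpha> \<Longrightarrow> V \<beta> \<alpha> \<in> Cell B"
  and dom2_vcomp[simp]: "\<alpha> \<in> Cell B \<Longrightarrow> \<beta> \<in> Cell B \<Longrightarrow> d2 \<beta> = c2 \<alpha> \<Longrightarrow> d2 (V \<beta> \<alpha>) = d2 \<alpha>"
  and cod2_vcomp[simp]: "\<alpha> \<in> Cell B \<Longrightarrow> \<beta> \<in> Cell B \<Longrightarrow> d2 \<beta> = c2 \<alpha> \<Longrightarrow> c2 (V \<beta> \<alpha>) = c2 \<beta>"
  using vcomp_hom2[of \<alpha> "d2 \<alpha>" "c2 \<alpha>" \<beta> "c2 \<beta>"] hom2_iff by auto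

lemma hcomp_arr[simp]: "f \<in> Arr B \<Longrightarrow> g \<in> Arr B \<Longrightarrow> t f = s g \<Longrightarrow> hc g f \<in> Arr B"
  and src_hcomp[simp]: "f \<in> Arr B \<Longrightarrow> g \<in> Arr B \<Longrightarrow> t f = s g \<Longrightarrow> s (hc g f) = s f"
  and tgt_hcomp[simp]: "f \<in> Arr B \<Longrightarrow> g \<in> Arr B \<Longrightarrow> t f = s g \<Longrightarrow> t (hc g f) = t g"
  using hcomp_hom[of f "s f" "t f" g "t g"] hom_iff by auto

lemma hcomp2_cell[simp]: "\<alpha> \<in> Cell B \<Longrightarrow> \<beta> \<in> Cell B \<Longrightarrow> t (d2 \<alpha>) = s (d2 \<beta>) \<Longrightarrow> H \<beta> \<alpha> \<in> Cell B"
  and dom2_hcomp2[simp]: "\<alpha> \<in> Cell B \<Longrightarrow> \<beta> \<in> Cell B \<Longrightarrow> t (d2 \<alpha>) = s (d2 \<beta>) \<Longrightarrow> d2 (H \<beta> \<alpha>) = hc (d2 \<beta>) (d2 \<alpha>)"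
  and cod2_hcomp2[simp]: "\<alpha> \<in> Cell B \<Longrightarrow> \<beta> \<in> Cell B \<Longrightarrow> t (d2 \<alpha>) = s (d2 \<beta>) \<Longrightarrow> c2 (H \<beta> \<alpha>) = hc (c2 \<beta>) (c2 \<alpha>)"
  using hcomp2_hom2[of \<alpha> "d2 \<alpha>" "c2 \<alpha>" \<beta> "d2 \<beta>" "c2 \<beta>"] hom2_iff by auto

lemma idn_arr[simp]: "X \<in> Obj B \<Longrightarrow> idn B X \<in> Arr B"
  and src_idn[simp]: "X \<in> Obj B \<Longrightarrow> s (idn B X) = X"
  and tgt_idn[simp]: "X \<in> Obj B \<Longrightarrow> t (idn B X) = X"
  using idn_hom hom_iff by blast+

lemma rinv_arr[simp]: "f \<in> Arr B \<Longrightarrow> rinv B f \<in> Arr B"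
  and src_rinv[simp]: "f \<in> Arr B \<Longrightarrow> s (rinv B f) = t f"
  and tgt_rinv[simp]: "f \<in> Arr B \<Longrightarrow> t (rinv B f) = s f"
  using rinv_hom[of f "s f" "t f"] hom_iff by blast+

lemma rinv2_cell[simp]: "\<alpha> \<in> Cell B \<Longrightarrow> rinv2 B \<alpha> \<in> Cell B"
  and dom2_rinv2[simp]: "\<alpha> \<in> Cell B \<Longrightarrow> d2 (rinv2 B \<alpha>) = rinv B (d2 \<alpha>)"
  and cod2_rinv2[simp]: "\<alpha> \<in> Cell B \<Longrightarrow> c2 (rinv2 B \<alpha>) = rinv B (c2 \<alpha>)"
  using rinv2_hom2[of \<alpha> "d2 \<alpha>" "c2 \<alpha>"] hom2_iff by blast+

lemma asc_cell[simp]: "f \<in> Arr B \<Longrightarrow> g \<in> Arr B \<Longrightarrow> h \<in> Arr B \<Longrightarrow> t f = s g \<Longrightarrow> t g = s h \<Longrightarrow> asc B h g f \<in> Cell B"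
  and dom2_asc[simp]: "f \<in> Arr B \<Longrightarrow> g \<in> Arr B \<Longrightarrow> h \<in> Arr B \<Longrightarrow> t f = s g \<Longrightarrow> t g = s h \<Longrightarrow> d2 (asc B h g f) = hc (hc h g) f"
  and cod2_asc[simp]: "f \<in> Arr B \<Longrightarrow> g \<in> Arr B \<Longrightarrow> h \<in> Arr B \<Longrightarrow> t f = s g \<Longrightarrow> t g = s h \<Longrightarrow> c2 (asc B h g f) = hc h (hc g f)"
  using asc_hom2 hom2_iff by blast+

lemma lun_cell[simp]: "f \<in> Arr B \<Longrightarrow> lun B f \<in> Cell B"
  and dom2_lun[simp]: "f \<in> Arr B \<Longrightarrow> d2 (lun B f) = hc (idn B (t f)) f"
  and cod2_lun[simp]: "f \<in> Arr B \<Longrightarrow> c2 (lun B f) = f"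
  using lun_hom2 hom2_iff by blast+
lemma run_cell[simp]: "f \<in> Arr B \<Longrightarrow> run B f \<in> Cell B"
  and dom2_run[simp]: "f \<in> Arr B \<Longrightarrow> d2 (run B f) = hc f (idn B (s f))"
  and cod2_run[simp]: "f \<in> Arr B \<Longrightarrow> c2 (run B f) = f"
  using run_hom2 hom2_iff by blast+
lemma eps_cell[simp]: "f \<in> Arr B \<Longrightarrow> eps B f \<in> Cell B"
  and dom2_eps[simp]: "f \<in> Arr B \<Longrightarrow> d2 (eps B f) = hc (rinv B f) f"
  and cod2_eps[simp]: "f \<in> Arr B \<Longrightarrow> c2 (eps B f) = idn B (s f)"
  using eps_hom2 hom2_iff by blast+
lemma eta_cell[simp]: "f \<in> Arr B \<Longrightarrow> eta B f \<in> Cell B"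
  and dom2_eta[simp]: "f \<in> Arr B \<Longrightarrow> d2 (eta B f) = idn B (t f)"
  and cod2_eta[simp]: "f \<in> Arr B \<Longrightarrow> c2 (eta B f) = hc f (rinv B f)"
  using eta_hom2 hom2_iff by blast+

lemma vcomp_assoc: "\<alpha> \<in> Cell B \<Longrightarrow> \<beta> \<in> Cell B \<Longrightarrow> \<gamma> \<in> Cell B \<Longrightarrow> d2 \<beta> = c2 \<alpha> \<Longrightarrow> d2 \<gamma> = c2 \<beta> \<Longrightarrow>
   V (V \<gamma> \<beta>) \<alpha> = V \<gamma> (V \<beta> \<alpha>)"
  using vcomp_assoc_hom2[of \<alpha> "d2 \<alpha>" "c2 \<alpha>" \<beta> "c2 \<beta>" \<gamma> "c2 \<gamma>"] hom2_iff by auto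
lemma vcomp_vid_left[simp]: "\<alpha> \<in> Cell B \<Longrightarrow> c2 \<alpha> = f \<Longrightarrow> V (I f) \<alpha> = \<alpha>"
  and vcomp_vid_right[simp]: "\<alpha> \<in> Cell B \<Longrightarrow> d2 \<alpha> = f \<Longrightarrow> V \<alpha> (I f) = \<alpha>"
  using vcomp_vid_hom2[of \<alpha> "d2 \<alpha>" "c2 \<alpha>"] hom2_iff by auto
lemma interchange: "\<alpha> \<in> Cell B \<Longrightarrow> \<alpha>' \<in> Cell B \<Longrightarrow> \<beta> \<in> Cell B \<Longrightarrow> \<beta>' \<in> Cell B \<Longrightarrow>
   d2 \<alpha>' = c2 \<alpha> \<Longrightarrow> d2 \<beta>' = c2 \<beta> \<Longrightarrow> t (d2 \<alpha>) = s (d2 \<beta>) \<Longrightarrow>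
   H (V \<beta>' \<beta>) (V \<alpha>' \<alpha>) = V (H \<beta>' \<alpha>') (H \<beta> \<alpha>)"
  using interchange_hom2[of \<alpha> "d2 \<alpha>" "c2 \<alpha>" \<alpha>' "c2 \<alpha>'" \<beta> "d2 \<beta>" "c2 \<beta>" \<beta>' "c2 \<beta>'"] hom2_iff by auto
lemma rinv2_vcomp: "\<alpha> \<in> Cell B \<Longrightarrow> \<beta> \<in> Cell B \<Longrightarrow> d2 \<beta> = c2 \<alpha> \<Longrightarrow> rinv2 B (V \<beta> \<alpha>) = V (rinv2 B \<beta>) (rinv2 B \<alpha>)"
  using rinv2_vcomp_hom2[of \<alpha> "d2 \<alpha>" "c2 \<alpha>" \<beta> "c2 \<beta>"] hom2_iff by auto
lemma asc_natural: "\<alpha> \<in> Cell B \<Longrightarrow> \<beta> \<in> Cell B \<Longrightarrow> \<gamma> \<in> Cell B \<Longrightarrow> t (d2 \<alpha>) = s (d2 \<beta>) \<Longrightarrow> t (d2 \<beta>) = s (d2 \<gamma>) \<Longrightarrow>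
   V (asc B (c2 \<gamma>) (c2 \<beta>) (c2 \<alpha>)) (H (H \<gamma> \<beta>) \<alpha>) = V (H \<gamma> (H \<beta> \<alpha>)) (asc B (d2 \<gamma>) (d2 \<beta>) (d2 \<alpha>))"
  using asc_natural_hom2[of \<alpha> "d2 \<alpha>" "c2 \<alpha>" \<beta> "d2 \<beta>" "c2 \<beta>" \<gamma> "d2 \<gamma>" "c2 \<gamma>"] hom2_iff by auto
lemma lun_natural: "\<alpha> \<in> Cell B \<Longrightarrow> V \<alpha> (lun B (d2 \<alpha>)) = V (lun B (c2 \<alpha>)) (H (I (idn B (t (d2 \<alpha>)))) \<alpha>)"
  using lun_natural_hom2[of \<alpha> "d2 \<alpha>" "c2 \<alpha>"] hom2_iff by auto
lemma run_natural: "\<alpha> \<in> Cell B \<Longrightarrow> V \<alpha> (run B (d2 \<alpha>)) = V (run B (c2 \<alpha>)) (H \<alpha> (I (idn B (s (d2 \<alpha>)))))"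
  using run_natural_hom2[of \<alpha> "d2 \<alpha>" "c2 \<alpha>"] hom2_iff by auto
lemma eps_natural: "\<alpha> \<in> Cell B \<Longrightarrow> V (eps B (c2 \<alpha>)) (H (rinv2 B \<alpha>) \<alpha>) = eps B (d2 \<alpha>)"
  using eps_natural_hom2[of \<alpha> "d2 \<alpha>" "c2 \<alpha>"] hom2_iff by auto
lemma eta_natural: "\<alpha> \<in> Cell B \<Longrightarrow> V (H \<alpha> (rinv2 B \<alpha>)) (eta B (d2 \<alpha>)) = eta B (c2 \<alpha>)"
  using eta_natural_hom2[of \<alpha> "d2 \<alpha>" "c2 \<alpha>"] hom2_iff by auto

definition inv2 :: "'b \<Rightarrow> 'b" where
  "inv2 \<alpha> = (SOME \<beta>. \<beta> \<in> hom2 B (c2 \<alpha>) (d2 \<alpha>) \<and> V \<beta> \<alpha> = I (d2 \<alpha>) \<and> V \<alpha> \<beta> = I (c2 \<alpha>))"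

lemma inv2_props: assumes "\<alpha> \<in> Cell B"
  shows "inv2 \<alpha> \<in> hom2 B (c2 \<alpha>) (d2 \<alpha>) \<and> V (inv2 \<alpha>) \<alpha> = I (d2 \<alpha>) \<and> V \<alpha> (inv2 \<alpha>) = I (c2 \<alpha>)"
proof -
  have "\<exists>\<beta>. \<beta> \<in> hom2 B (c2 \<alpha>) (d2 \<alpha>) \<and> V \<beta> \<alpha> = I (d2 \<alpha>) \<and> V \<alpha> \<beta> = I (c2 \<alpha>)"
    using vinverse_ex_hom2[of \<alpha> "d2 \<alpha>" "c2 \<alpha>"] assms hom2_iff by auto
  then show ?thesis unfolding inv2_def by (rule someI_ex)
qed
lemma inv2_cell[simp]: "\<alpha> \<in> Cell B \<Longrightarrow> inv2 \<alpha> \<in> Cell B"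
  and dom2_inv2[simp]: "\<alpha> \<in> Cell B \<Longrightarrow> d2 (inv2 \<alpha>) = c2 \<alpha>"
  and cod2_inv2[simp]: "\<alpha> \<in> Cell B \<Longrightarrow> c2 (inv2 \<alpha>) = d2 \<alpha>"
  using inv2_props hom2_iff by blast+
lemma vcomp_inv2_left[simp]: "\<alpha> \<in> Cell B \<Longrightarrow> V (inv2 \<alpha>) \<alpha> = I (d2 \<alpha>)"
  and vcomp_inv2_right[simp]: "\<alpha> \<in> Cell B \<Longrightarrow> V \<alpha> (inv2 \<alpha>) = I (c2 \<alpha>)"
  using inv2_props by blast+
lemma vcomp_inv2_cancel_left[simp]: "\<alpha> \<in> Cell B \<Longrightarrow> \<gamma> \<in> Cell B \<Longrightarrow> c2 \<gamma> = d2 \<alpha> \<Longrightarrow> V (inv2 \<alpha>) (V \<alpha> \<gamma>) = \<gamma>"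
  by (simp flip: vcomp_assoc)
lemma vcomp_inv2_cancel_right[simp]: "\<alpha> \<in> Cell B \<Longrightarrow> \<gamma> \<in> Cell B \<Longrightarrow> c2 \<gamma> = c2 \<alpha> \<Longrightarrow> V \<alpha> (V (inv2 \<alpha>) \<gamma>) = \<gamma>"
  by (simp flip: vcomp_assoc)

lemma inv2_unique: "\<alpha> \<in> Cell B \<Longrightarrow> \<beta> \<in> Cell B \<Longrightarrow> d2 \<beta> = c2 \<alpha> \<Longrightarrow> V \<beta> \<alpha> = I (d2 \<alpha>) \<Longrightarrow> inv2 \<alpha> = \<beta>"
proof -
  assume a: "\<alpha> \<in> Cell B" "\<beta> \<in> Cell B" "d2 \<beta> = c2 \<alpha>" "V \<beta> \<alpha> = I (d2 \<alpha>)"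
  have "inv2 \<alpha> = V (V \<beta> \<alpha>) (inv2 \<alpha>)" using a by simp
  also have "\<dots> = V \<beta> (V \<alpha> (inv2 \<alpha>))" using a by (intro vcomp_assoc) auto
  also have "\<dots> = \<beta>" using a by simp
  finally show ?thesis .
qed

lemma vcomp_cancel_left: "\<alpha> \<in> Cell B \<Longrightarrow> \<beta> \<in> Cell B \<Longrightarrow> \<gamma> \<in> Cell B \<Longrightarrow> c2 \<beta> = d2 \<alpha> \<Longrightarrow> c2 \<gamma> = d2 \<alpha> \<Longrightarrow>
   V \<alpha> \<beta> = V \<alpha> \<gamma> \<Longrightarrow> \<beta> = \<gamma>"
  by (metis vcomp_inv2_cancel_left)
lemma vcomp_cancel_right: "\<alpha> \<in> Cell B \<Longrightarrow> \<beta> \<in> Cell B \<Longrightarrow> \<gamma> \<in> Cell B \<Longrightarrow> d2 \<beta> = c2 \<alpha> \<Longrightarrow> d2 \<gamma> = c2 \<alpha> \<Longrightarrow>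
   V \<beta> \<alpha> = V \<gamma> \<alpha> \<Longrightarrow> \<beta> = \<gamma>"
proof -
  assume a: "\<alpha> \<in> Cell B" "\<beta> \<in> Cell B" "\<gamma> \<in> Cell B" "d2 \<beta> = c2 \<alpha>" "d2 \<gamma> = c2 \<alpha>" "V \<beta> \<alpha> = V \<gamma> \<alpha>"
  have "\<beta> = V (V \<beta> \<alpha>) (inv2 \<alpha>)" using a by (subst vcomp_assoc) auto
  also have "\<dots> = V (V \<gamma> \<alpha>) (inv2 \<alpha>)" using a by simp
  also have "\<dots> = \<gamma>" using a by (simp add: vcomp_assoc)
  finally show ?thesis .
qed


lemma inv2_inv2[simp]: "\<alpha> \<in> Cell B \<Longrightarrow> inv2 (inv2 \<alpha>) = \<alpha>"
  by (rule inv2_unique) auto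
lemma inv2_vid[simp]: "f \<in> Arr B \<Longrightarrow> inv2 (I f) = I f"
  by (rule inv2_unique) auto
lemma inv2_vcomp: "\<alpha> \<in> Cell B \<Longrightarrow> \<beta> \<in> Cell B \<Longrightarrow> d2 \<beta> = c2 \<alpha> \<Longrightarrow> inv2 (V \<beta> \<alpha>) = V (inv2 \<alpha>) (inv2 \<beta>)"
  by (rule inv2_unique) (auto simp: vcomp_assoc)
lemma hcomp2_vid_vcomp: "\<alpha> \<in> Cell B \<Longrightarrow> \<beta> \<in> Cell B \<Longrightarrow> d2 \<beta> = c2 \<alpha> \<Longrightarrow> g \<in> Arr B \<Longrightarrow> s g = t (d2 \<alpha>) \<Longrightarrow>
   H (I g) (V \<beta> \<alpha>) = V (H (I g) \<beta>) (H (I g) \<alpha>)"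
  using interchange[of \<alpha> \<beta> "I g" "I g"] by simp
lemma hcomp2_vcomp_vid: "\<alpha> \<in> Cell B \<Longrightarrow> \<beta> \<in> Cell B \<Longrightarrow> d2 \<beta> = c2 \<alpha> \<Longrightarrow> f \<in> Arr B \<Longrightarrow> t f = s (d2 \<alpha>) \<Longrightarrow>
   H (V \<beta> \<alpha>) (I f) = V (H \<beta> (I f)) (H \<alpha> (I f))"
  using interchange[of "I f" "I f" \<alpha> \<beta>] by simp
lemma inv2_hcomp2: "\<alpha> \<in> Cell B \<Longrightarrow> \<beta> \<in> Cell B \<Longrightarrow> t (d2 \<alpha>) = s (d2 \<beta>) \<Longrightarrow> inv2 (H \<beta> \<alpha>) = H (inv2 \<beta>) (inv2 \<alpha>)"
  by (rule inv2_unique) (auto simp flip: interchange)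

lemma vcomp_inv2_swap: assumes eq: "V \<alpha> \<beta> = V \<gamma> \<delta>" and C: "\<alpha> \<in> Cell B" "\<beta> \<in> Cell B" "\<gamma> \<in> Cell B" "\<delta> \<in> Cell B"
  and ty: "d2 \<alpha> = c2 \<beta>" "d2 \<gamma> = c2 \<delta>" "d2 \<beta> = d2 \<delta>" "c2 \<alpha> = c2 \<gamma>"
  shows "V \<delta> (inv2 \<beta>) = V (inv2 \<gamma>) \<alpha>"
proof -
  have "V \<delta> (inv2 \<beta>) = V (inv2 \<gamma>) (V \<gamma> (V \<delta> (inv2 \<beta>)))" using C ty by simp
  also have "\<dots> = V (inv2 \<gamma>) (V (V \<gamma> \<delta>) (inv2 \<beta>))" using C ty by (simp add: vcomp_assoc)
  also have "\<dots> = V (inv2 \<gamma>) (V (V \<alpha> \<beta>) (inv2 \<beta>))" using eq by simp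
  also have "\<dots> = V (inv2 \<gamma>) \<alpha>" using C ty by (simp add: vcomp_assoc)
  finally show ?thesis .
qed

lemma inv2_eqI: assumes eq: "V \<alpha> \<beta> = \<gamma>" and C: "\<alpha> \<in> Cell B" "\<beta> \<in> Cell B" and ty: "d2 \<alpha> = c2 \<beta>"
  shows "V (inv2 \<beta>) (inv2 \<alpha>) = inv2 \<gamma>"
  unfolding eq[symmetric] using C ty by (simp add: inv2_vcomp)

lemma vcomp_solve_left: "V g x = y \<Longrightarrow> g \<in> Cell B \<Longrightarrow> x \<in> Cell B \<Longrightarrow> d2 g = c2 x \<Longrightarrow> x = V (inv2 g) y"
  by (metis vcomp_inv2_cancel_left)

lemma inv2_coherence: assumes C: "A \<in> Cell B" "P \<in> Cell B" "Q \<in> Cell B" "R \<in> Cell B" "S \<in> Cell B"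
  and ty: "d2 A = c2 P" "d2 P = c2 Q" "d2 R = c2 S" "d2 Q = d2 S"
  and eq: "V A (V P Q) = V R S"
  shows "V (inv2 Q) (inv2 P) = V (inv2 S) (V (inv2 R) A)"
proof -
  have c2eq: "c2 A = c2 R" using eq C ty by (metis vcomp_cell cod2_vcomp dom2_vcomp)
  have "inv2 (V (V A P) Q) = inv2 (V R S)" using eq C ty by (simp add: vcomp_assoc)
  then have "V (V (inv2 Q) (inv2 P)) (inv2 A) = V (inv2 S) (inv2 R)" using C ty c2eq by (simp add: inv2_vcomp vcomp_assoc)
  then have "V (V (V (inv2 Q) (inv2 P)) (inv2 A)) A = V (V (inv2 S) (inv2 R)) A" by simp
  then show ?thesis using C ty c2eq by (simp add: vcomp_assoc)
qed

section \<open>Consequences of the coherence axioms\<close>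

lemma lun_conjugate: assumes a: "a \<in> Cell B" shows "V (lun B (c2 a)) (V (H (I (idn B (t (d2 a)))) a) (inv2 (lun B (d2 a)))) = a"
proof -
  have "V (lun B (c2 a)) (V (H (I (idn B (t (d2 a)))) a) (inv2 (lun B (d2 a)))) = V (V (lun B (c2 a)) (H (I (idn B (t (d2 a)))) a)) (inv2 (lun B (d2 a)))"
    using a by (simp add: vcomp_assoc)
  also have "\<dots> = V (V a (lun B (d2 a))) (inv2 (lun B (d2 a)))" using lun_natural[OF a] by simp
  also have "\<dots> = a" using a by (simp add: vcomp_assoc)
  finally show ?thesis .
qed

lemma run_conjugate: assumes a: "a \<in> Cell B" shows "V (run B (c2 a)) (V (H a (I (idn B (s (d2 a))))) (inv2 (run B (d2 a)))) = a"
proof -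
  have "V (run B (c2 a)) (V (H a (I (idn B (s (d2 a))))) (inv2 (run B (d2 a)))) = V (V (run B (c2 a)) (H a (I (idn B (s (d2 a)))))) (inv2 (run B (d2 a)))"
    using a by (simp add: vcomp_assoc)
  also have "\<dots> = V (V a (run B (d2 a))) (inv2 (run B (d2 a)))" using run_natural[OF a] by simp
  also have "\<dots> = a" using a by (simp add: vcomp_assoc)
  finally show ?thesis .
qed

lemma whisker_left_unit_inj: assumes a: "\<alpha> \<in> Cell B" "\<beta> \<in> Cell B" "d2 \<alpha> = d2 \<beta>" "c2 \<alpha> = c2 \<beta>"
  and u: "u = idn B (t (d2 \<alpha>))" and h0: "H (I u) \<alpha> = H (I u) \<beta>" shows "\<alpha> = \<beta>"
proof -
  have h: "H (I (idn B (t (d2 \<alpha>)))) \<alpha> = H (I (idn B (t (d2 \<alpha>)))) \<beta>" using u h0 by (simp only:)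
  have "V \<alpha> (lun B (d2 \<alpha>)) = V (lun B (c2 \<alpha>)) (H (I (idn B (t (d2 \<alpha>)))) \<alpha>)"
    using lun_natural[of \<alpha>] a(1) by blast
  also have "\<dots> = V (lun B (c2 \<beta>)) (H (I (idn B (t (d2 \<beta>)))) \<beta>)"
    using a(3,4) h by (simp only:)
  also have "\<dots> = V \<beta> (lun B (d2 \<beta>))" using lun_natural[of \<beta>] a(2) by (simp only:)
  finally have "V \<alpha> (lun B (d2 \<alpha>)) = V \<beta> (lun B (d2 \<alpha>))" using a(3) by (simp only:)
  then show ?thesis by (rule vcomp_cancel_right[rotated 5]) (use a in auto)
qed
lemma whisker_right_unit_inj: assumes a: "\<alpha> \<in> Cell B" "\<beta> \<in> Cell B" "d2 \<alpha> = d2 \<beta>" "c2 \<alpha> = c2 \<beta>"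
  and u: "u = idn B (s (d2 \<alpha>))" and h0: "H \<alpha> (I u) = H \<beta> (I u)" shows "\<alpha> = \<beta>"
proof -
  have h: "H \<alpha> (I (idn B (s (d2 \<alpha>)))) = H \<beta> (I (idn B (s (d2 \<alpha>))))" using u h0 by (simp only:)
  have "V \<alpha> (run B (d2 \<alpha>)) = V (run B (c2 \<alpha>)) (H \<alpha> (I (idn B (s (d2 \<alpha>)))))"
    using run_natural[of \<alpha>] a(1) by blast
  also have "\<dots> = V (run B (c2 \<beta>)) (H \<beta> (I (idn B (s (d2 \<beta>)))))"
    using a(3,4) h by (simp only:)
  also have "\<dots> = V \<beta> (run B (d2 \<beta>))" using run_natural[of \<beta>] a(2) by (simp only:)
  finally have "V \<alpha> (run B (d2 \<alpha>)) = V \<beta> (run B (d2 \<alpha>))" using a(3) by (simp only:)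
  then show ?thesis by (rule vcomp_cancel_right[rotated 5]) (use a in auto)
qed

text \<open>Kelly's lemmas: the pentagon and the triangle determine how the unitors interact with composites.\<close>

lemma lun_hcomp: assumes f: "f \<in> Arr B" and g: "g \<in> Arr B" and fg: "t f = s g"
  shows "V (lun B (hc g f)) (asc B (idn B (t g)) g f) = H (lun B g) (I f)"
proof -
  define P where "P = V (asc B (idn B (t g)) (hc (idn B (t g)) g) f) (H (asc B (idn B (t g)) (idn B (t g)) g) (I f))"
  have P: "P \<in> Cell B" "d2 P = hc (hc (hc (idn B (t g)) (idn B (t g))) g) f" "c2 P = hc (idn B (t g)) (hc (hc (idn B (t g)) g) f)"
    using f g fg by (auto simp: P_def)
  have "V (H (I (idn B (t g))) (V (lun B (hc g f)) (asc B (idn B (t g)) g f))) P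
      = V (V (H (I (idn B (t g))) (lun B (hc g f))) (H (I (idn B (t g))) (asc B (idn B (t g)) g f))) P"
    using f g fg by (subst hcomp2_vid_vcomp) auto
  also have "\<dots> = V (H (I (idn B (t g))) (lun B (hc g f))) (V (H (I (idn B (t g))) (asc B (idn B (t g)) g f)) P)"
    using f g fg P by (simp add: vcomp_assoc P_def)
  also have "\<dots> = V (H (I (idn B (t g))) (lun B (hc g f))) (V (asc B (idn B (t g)) (idn B (t g)) (hc g f)) (asc B (hc (idn B (t g)) (idn B (t g))) g f))"
    using f g fg pentagon[of f g "idn B (t g)" "idn B (t g)"] by (simp add: P_def)
  also have "\<dots> = V (V (H (I (idn B (t g))) (lun B (hc g f))) (asc B (idn B (t g)) (idn B (t g)) (hc g f))) (asc B (hc (idn B (t g)) (idn B (t g))) g f)"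
    using f g fg by (simp add: vcomp_assoc)
  also have "\<dots> = V (H (run B (idn B (t g))) (I (hc g f))) (asc B (hc (idn B (t g)) (idn B (t g))) g f)"
    using f g fg triangle[of "hc g f" "idn B (t g)"] by simp
  also have "\<dots> = V (asc B (idn B (t g)) g f) (H (H (run B (idn B (t g))) (I g)) (I f))"
    using f g fg asc_natural[of "I f" "I g" "run B (idn B (t g))"] by simp
  also have "\<dots> = V (asc B (idn B (t g)) g f) (H (V (H (I (idn B (t g))) (lun B g)) (asc B (idn B (t g)) (idn B (t g)) g)) (I f))"
    using f g fg triangle[of g "idn B (t g)"] by simp
  also have "\<dots> = V (asc B (idn B (t g)) g f) (V (H (H (I (idn B (t g))) (lun B g)) (I f)) (H (asc B (idn B (t g)) (idn B (t g)) g) (I f)))"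
    using f g fg by (subst hcomp2_vcomp_vid) auto
  also have "\<dots> = V (V (asc B (idn B (t g)) g f) (H (H (I (idn B (t g))) (lun B g)) (I f))) (H (asc B (idn B (t g)) (idn B (t g)) g) (I f))"
    using f g fg by (simp add: vcomp_assoc)
  also have "\<dots> = V (V (H (I (idn B (t g))) (H (lun B g) (I f))) (asc B (idn B (t g)) (hc (idn B (t g)) g) f)) (H (asc B (idn B (t g)) (idn B (t g)) g) (I f))"
    using f g fg asc_natural[of "I f" "lun B g" "I (idn B (t g))"] by simp
  also have "\<dots> = V (H (I (idn B (t g))) (H (lun B g) (I f))) P"
    using f g fg by (simp add: vcomp_assoc P_def)
  finally have eq: "V (H (I (idn B (t g))) (V (lun B (hc g f)) (asc B (idn B (t g)) g f))) P = V (H (I (idn B (t g))) (H (lun B g) (I f))) P" .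
  have eq2: "H (I (idn B (t g))) (V (lun B (hc g f)) (asc B (idn B (t g)) g f)) = H (I (idn B (t g))) (H (lun B g) (I f))"
    by (rule vcomp_cancel_right[OF P(1) _ _ _ _ eq]) (insert f g fg, simp_all add: P)
  show ?thesis by (rule whisker_left_unit_inj[OF _ _ _ _ _ eq2]) (insert f g fg, simp_all)
qed
lemma run_hcomp: assumes f: "f \<in> Arr B" and g: "g \<in> Arr B" and fg: "t f = s g"
  shows "run B (hc g f) = V (H (I g) (run B f)) (asc B g f (idn B (s f)))"
proof -
  have "V (asc B g f (idn B (s f))) (H (run B (hc g f)) (I (idn B (s f))))
     = V (asc B g f (idn B (s f))) (V (H (I (hc g f)) (lun B (idn B (s f)))) (asc B (hc g f) (idn B (s f)) (idn B (s f))))"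
    using f g fg triangle[of "idn B (s f)" "hc g f"] by simp
  also have "\<dots> = V (V (asc B g f (idn B (s f))) (H (I (hc g f)) (lun B (idn B (s f))))) (asc B (hc g f) (idn B (s f)) (idn B (s f)))"
    using f g fg by (simp add: vcomp_assoc)
  also have "\<dots> = V (V (H (I g) (H (I f) (lun B (idn B (s f))))) (asc B g f (hc (idn B (s f)) (idn B (s f))))) (asc B (hc g f) (idn B (s f)) (idn B (s f)))"
    using f g fg asc_natural[of "lun B (idn B (s f))" "I f" "I g"] by simp
  also have "\<dots> = V (H (I g) (H (I f) (lun B (idn B (s f))))) (V (asc B g f (hc (idn B (s f)) (idn B (s f)))) (asc B (hc g f) (idn B (s f)) (idn B (s f))))"
    using f g fg by (simp add: vcomp_assoc)
  also have "\<dots> = V (H (I g) (H (I f) (lun B (idn B (s f))))) (V (H (I g) (asc B f (idn B (s f)) (idn B (s f)))) (V (asc B g (hc f (idn B (s f))) (idn B (s f))) (H (asc B g f (idn B (s f))) (I (idn B (s f))))))"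
    using f g fg pentagon[of "idn B (s f)" "idn B (s f)" f g] by simp
  also have "\<dots> = V (V (H (I g) (H (I f) (lun B (idn B (s f))))) (H (I g) (asc B f (idn B (s f)) (idn B (s f))))) (V (asc B g (hc f (idn B (s f))) (idn B (s f))) (H (asc B g f (idn B (s f))) (I (idn B (s f)))))"
    using f g fg by (simp add: vcomp_assoc)
  also have "\<dots> = V (H (I g) (V (H (I f) (lun B (idn B (s f)))) (asc B f (idn B (s f)) (idn B (s f))))) (V (asc B g (hc f (idn B (s f))) (idn B (s f))) (H (asc B g f (idn B (s f))) (I (idn B (s f)))))"
    using f g fg by (subst hcomp2_vid_vcomp) auto
  also have "\<dots> = V (H (I g) (H (run B f) (I (idn B (s f))))) (V (asc B g (hc f (idn B (s f))) (idn B (s f))) (H (asc B g f (idn B (s f))) (I (idn B (s f)))))"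
    using f g fg triangle[of "idn B (s f)" f] by simp
  also have "\<dots> = V (V (H (I g) (H (run B f) (I (idn B (s f))))) (asc B g (hc f (idn B (s f))) (idn B (s f)))) (H (asc B g f (idn B (s f))) (I (idn B (s f))))"
    using f g fg by (simp add: vcomp_assoc)
  also have "\<dots> = V (V (asc B g f (idn B (s f))) (H (H (I g) (run B f)) (I (idn B (s f))))) (H (asc B g f (idn B (s f))) (I (idn B (s f))))"
    using f g fg asc_natural[of "I (idn B (s f))" "run B f" "I g"] by simp
  also have "\<dots> = V (asc B g f (idn B (s f))) (V (H (H (I g) (run B f)) (I (idn B (s f)))) (H (asc B g f (idn B (s f))) (I (idn B (s f)))))"
    using f g fg by (simp add: vcomp_assoc)
  also have "\<dots> = V (asc B g f (idn B (s f))) (H (V (H (I g) (run B f)) (asc B g f (idn B (s f)))) (I (idn B (s f))))"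
    using f g fg by (subst hcomp2_vcomp_vid) auto
  finally have eq: "V (asc B g f (idn B (s f))) (H (run B (hc g f)) (I (idn B (s f))))
     = V (asc B g f (idn B (s f))) (H (V (H (I g) (run B f)) (asc B g f (idn B (s f)))) (I (idn B (s f))))" .
  have eq2: "H (run B (hc g f)) (I (idn B (s f))) = H (V (H (I g) (run B f)) (asc B g f (idn B (s f)))) (I (idn B (s f)))"
    by (rule vcomp_cancel_left[OF _ _ _ _ _ eq]) (insert f g fg, simp_all)
  show ?thesis by (rule whisker_right_unit_inj[OF _ _ _ _ _ eq2]) (insert f g fg, simp_all)
qed

lemma lun_run_idn: assumes X: "X \<in> Obj B" shows "lun B (idn B X) = run B (idn B X)"
proof -
  have k: "V (lun B (hc (idn B X) (idn B X))) (asc B (idn B X) (idn B X) (idn B X)) = H (lun B (idn B X)) (I (idn B X))"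
    using lun_hcomp[of "idn B X" "idn B X"] X by simp
  have tr: "V (H (I (idn B X)) (lun B (idn B X))) (asc B (idn B X) (idn B X) (idn B X)) = H (run B (idn B X)) (I (idn B X))"
    using triangle[of "idn B X" "idn B X"] X by simp
  have n: "V (lun B (idn B X)) (lun B (hc (idn B X) (idn B X))) = V (lun B (idn B X)) (H (I (idn B X)) (lun B (idn B X)))"
    using lun_natural[of "lun B (idn B X)"] X by simp
  have l2: "lun B (hc (idn B X) (idn B X)) = H (I (idn B X)) (lun B (idn B X))"
    by (rule vcomp_cancel_left[OF _ _ _ _ _ n]) (insert X, simp_all)
  have "H (lun B (idn B X)) (I (idn B X)) = H (run B (idn B X)) (I (idn B X))"
    using k tr l2 by simp
  then show ?thesis by (rule whisker_right_unit_inj[rotated 5]) (insert X, simp_all)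
qed

section \<open>Words and their evaluation\<close>

text \<open>A letter \<open>(f, True)\<close> stands for \<open>f\<close> and \<open>(f, False)\<close> for its formal inverse \<open>f\<^sup>*\<close>.\<close>

definition letter_arr :: "'a \<times> bool \<Rightarrow> 'a" where "letter_arr x = (if snd x then fst x else rinv B (fst x))"
definition letter_src :: "'a \<times> bool \<Rightarrow> 'o" where "letter_src x = (if snd x then s (fst x) else t (fst x))"
definition letter_tgt :: "'a \<times> bool \<Rightarrow> 'o" where "letter_tgt x = (if snd x then t (fst x) else s (fst x))"

fun wf_word :: "'o \<Rightarrow> ('a \<times> bool) list \<Rightarrow> bool" where
  "wf_word X [] = (X \<in> Obj B)"
| "wf_word X (x # w) = (fst x \<in> Arr B \<and> letter_src x = X \<and> wf_word (letter_tgt x) w)"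

fun word_end :: "'o \<Rightarrow> ('a \<times> bool) list \<Rightarrow> 'o" where
  "word_end X [] = X"
| "word_end X (x # w) = word_end (letter_tgt x) w"

fun eval_word :: "'o \<Rightarrow> ('a \<times> bool) list \<Rightarrow> 'a" where
  "eval_word X [] = idn B X"
| "eval_word X (x # w) = (if w = [] then letter_arr x else hc (eval_word (letter_tgt x) w) (letter_arr x))"

lemma letter_arr_arr[simp]: "fst x \<in> Arr B \<Longrightarrow> letter_arr x \<in> Arr B" by (simp add: letter_arr_def)
lemma src_letter_arr[simp]: "fst x \<in> Arr B \<Longrightarrow> s (letter_arr x) = letter_src x" by (simp add: letter_arr_def letter_src_def)
lemma tgt_letter_arr[simp]: "fst x \<in> Arr B \<Longrightarrow> t (letter_arr x) = letter_tgt x" by (simp add: letter_arr_def letter_tgt_def)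
lemma letter_src_obj[simp]: "fst x \<in> Arr B \<Longrightarrow> letter_src x \<in> Obj B" by (simp add: letter_src_def)
lemma letter_tgt_obj[simp]: "fst x \<in> Arr B \<Longrightarrow> letter_tgt x \<in> Obj B" by (simp add: letter_tgt_def)

lemma wf_word_obj[simp]: "wf_word X w \<Longrightarrow> X \<in> Obj B"
  by (cases w) auto
lemma word_end_obj[simp]: "wf_word X w \<Longrightarrow> word_end X w \<in> Obj B"
  by (induction X w rule: word_end.induct) auto
lemma wf_word_append[simp]: "wf_word X (w1 @ w2) \<longleftrightarrow> wf_word X w1 \<and> wf_word (word_end X w1) w2"
  by (induction X w1 rule: word_end.induct) auto
lemma word_end_append[simp]: "word_end X (w1 @ w2) = word_end (word_end X w1) w2"
  by (induction X w1 rule: word_end.induct) auto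

lemma eval_word_props: "wf_word X w \<Longrightarrow> eval_word X w \<in> Arr B \<and> s (eval_word X w) = X \<and> t (eval_word X w) = word_end X w"
proof (induction X w rule: eval_word.induct)
  case (1 X) then show ?case by simp
next
  case (2 X x w) then show ?case by (cases w) auto
qed
lemma eval_word_arr[simp]: "wf_word X w \<Longrightarrow> eval_word X w \<in> Arr B"
  and src_eval_word[simp]: "wf_word X w \<Longrightarrow> s (eval_word X w) = X"
  and tgt_eval_word[simp]: "wf_word X w \<Longrightarrow> t (eval_word X w) = word_end X w"
  using eval_word_props by blast+

lemma eval_word_Cons_Cons: "eval_word X (x # y # v) = hc (eval_word (letter_tgt x) (y # v)) (letter_arr x)" by simp

text \<open>The comparison cell \<open>eval (v @ w) \<Rightarrow> eval w * eval v\<close>, built from associators, and from an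
  inverse unitor when one of the words is empty.\<close>

fun concat_iso :: "'o \<Rightarrow> ('a \<times> bool) list \<Rightarrow> ('a \<times> bool) list \<Rightarrow> 'b" where
  "concat_iso X [] w2 = inv2 (run B (eval_word X w2))"
| "concat_iso X [x] w2 = (if w2 = [] then inv2 (lun B (letter_arr x)) else I (hc (eval_word (letter_tgt x) w2) (letter_arr x)))"
| "concat_iso X (x # y # v) w2 = (if w2 = [] then inv2 (lun B (eval_word X (x # y # v)))
     else V (asc B (eval_word (word_end (letter_tgt x) (y # v)) w2) (eval_word (letter_tgt x) (y # v)) (letter_arr x)) (H (concat_iso (letter_tgt x) (y # v) w2) (I (letter_arr x))))"

lemma concat_iso_props: "wf_word X w1 \<Longrightarrow> wf_word (word_end X w1) w2 \<Longrightarrow>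
   concat_iso X w1 w2 \<in> Cell B \<and> d2 (concat_iso X w1 w2) = eval_word X (w1 @ w2) \<and> c2 (concat_iso X w1 w2) = hc (eval_word (word_end X w1) w2) (eval_word X w1)"
proof (induction X w1 w2 rule: concat_iso.induct)
  case (1 X w2) then show ?case by simp
next
  case (2 X x w2) then show ?case by (cases w2) auto
next
  case (3 X x y v w2)
  then show ?case
    by (cases "w2 = []") (simp_all del: eval_word.simps add: eval_word_Cons_Cons eval_word.simps(1))
qed

lemma concat_iso_cell[simp]: "wf_word X w1 \<Longrightarrow> wf_word (word_end X w1) w2 \<Longrightarrow> concat_iso X w1 w2 \<in> Cell B"
  and dom2_concat_iso[simp]: "wf_word X w1 \<Longrightarrow> wf_word (word_end X w1) w2 \<Longrightarrow> d2 (concat_iso X w1 w2) = eval_word X (w1 @ w2)"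
  and cod2_concat_iso[simp]: "wf_word X w1 \<Longrightarrow> wf_word (word_end X w1) w2 \<Longrightarrow> c2 (concat_iso X w1 w2) = hc (eval_word (word_end X w1) w2) (eval_word X w1)"
  using concat_iso_props by blast+

lemma concat_iso_Nil_right_nonempty: "w1 \<noteq> [] \<Longrightarrow> concat_iso X w1 [] = inv2 (lun B (eval_word X w1))"
  by (cases "(X,w1,[]::('a\<times>bool) list)" rule: concat_iso.cases) auto

lemma concat_iso_assoc_Nil_left: assumes w2: "wf_word X w2" and w3: "wf_word (word_end X w2) w3"
  shows "V (asc B (eval_word (word_end X w2) w3) (eval_word X w2) (idn B X)) (V (H (concat_iso X w2 w3) (I (idn B X))) (inv2 (run B (eval_word X (w2 @ w3)))))
       = V (H (I (eval_word (word_end X w2) w3)) (inv2 (run B (eval_word X w2)))) (concat_iso X w2 w3)"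
proof -
  let ?E2 = "eval_word X w2" and ?E3 = "eval_word (word_end X w2) w3"
  have n: "V (concat_iso X w2 w3) (run B (eval_word X (w2 @ w3))) = V (run B (hc ?E3 ?E2)) (H (concat_iso X w2 w3) (I (idn B X)))"
    using run_natural[of "concat_iso X w2 w3"] w2 w3 by simp
  have e1: "V (H (concat_iso X w2 w3) (I (idn B X))) (inv2 (run B (eval_word X (w2 @ w3)))) = V (inv2 (run B (hc ?E3 ?E2))) (concat_iso X w2 w3)"
    by (rule vcomp_inv2_swap[OF n]) (insert w2 w3, simp_all)
  have k2: "run B (hc ?E3 ?E2) = V (H (I ?E3) (run B ?E2)) (asc B ?E3 ?E2 (idn B X))"
    using run_hcomp[of ?E2 ?E3] w2 w3 by simp
  have "V (asc B ?E3 ?E2 (idn B X)) (V (H (concat_iso X w2 w3) (I (idn B X))) (inv2 (run B (eval_word X (w2 @ w3)))))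
      = V (asc B ?E3 ?E2 (idn B X)) (V (inv2 (V (H (I ?E3) (run B ?E2)) (asc B ?E3 ?E2 (idn B X)))) (concat_iso X w2 w3))"
    using e1 k2 by simp
  also have "\<dots> = V (asc B ?E3 ?E2 (idn B X)) (V (V (inv2 (asc B ?E3 ?E2 (idn B X))) (inv2 (H (I ?E3) (run B ?E2)))) (concat_iso X w2 w3))"
    using w2 w3 by (subst inv2_vcomp) auto
  also have "\<dots> = V (inv2 (H (I ?E3) (run B ?E2))) (concat_iso X w2 w3)"
    using w2 w3 by (simp add: vcomp_assoc)
  also have "\<dots> = V (H (I ?E3) (inv2 (run B ?E2))) (concat_iso X w2 w3)"
    using w2 w3 by (simp add: inv2_hcomp2)
  finally show ?thesis .
qed

lemma concat_iso_assoc_Nil_middle: assumes w1: "wf_word X w1" and ne: "w1 \<noteq> []" and w3: "wf_word (word_end X w1) w3"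
  shows "V (asc B (eval_word (word_end X w1) w3) (idn B (word_end X w1)) (eval_word X w1)) (V (H (inv2 (run B (eval_word (word_end X w1) w3))) (I (eval_word X w1))) (concat_iso X w1 w3))
       = V (H (I (eval_word (word_end X w1) w3)) (inv2 (lun B (eval_word X w1)))) (concat_iso X w1 w3)"
proof -
  let ?E1 = "eval_word X w1" and ?E3 = "eval_word (word_end X w1) w3" and ?Y = "word_end X w1"
  have tr: "V (H (I ?E3) (lun B ?E1)) (asc B ?E3 (idn B ?Y) ?E1) = H (run B ?E3) (I ?E1)"
    using triangle[of ?E1 ?E3] w1 w3 by simp
  have "V (inv2 (asc B ?E3 (idn B ?Y) ?E1)) (inv2 (H (I ?E3) (lun B ?E1))) = inv2 (H (run B ?E3) (I ?E1))"
    by (rule inv2_eqI[OF tr]) (insert w1 w3, simp_all)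
  then have tr2: "V (inv2 (asc B ?E3 (idn B ?Y) ?E1)) (H (I ?E3) (inv2 (lun B ?E1))) = H (inv2 (run B ?E3)) (I ?E1)"
    using w1 w3 by (simp add: inv2_hcomp2)
  have "V (asc B ?E3 (idn B ?Y) ?E1) (V (H (inv2 (run B ?E3)) (I ?E1)) (concat_iso X w1 w3))
      = V (asc B ?E3 (idn B ?Y) ?E1) (V (V (inv2 (asc B ?E3 (idn B ?Y) ?E1)) (H (I ?E3) (inv2 (lun B ?E1)))) (concat_iso X w1 w3))"
    using tr2 by simp
  also have "\<dots> = V (H (I ?E3) (inv2 (lun B ?E1))) (concat_iso X w1 w3)"
    using w1 w3 by (simp add: vcomp_assoc)
  finally show ?thesis .
qed

lemma concat_iso_assoc_Nil_right: assumes w1: "wf_word X w1" and w2: "wf_word (word_end X w1) w2" and ne1: "w1 \<noteq> []" and ne2: "w2 \<noteq> []"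
  shows "V (asc B (idn B (word_end (word_end X w1) w2)) (eval_word (word_end X w1) w2) (eval_word X w1)) (V (H (inv2 (lun B (eval_word (word_end X w1) w2))) (I (eval_word X w1))) (concat_iso X w1 w2))
       = V (H (I (idn B (word_end (word_end X w1) w2))) (concat_iso X w1 w2)) (inv2 (lun B (eval_word X (w1 @ w2))))"
proof -
  let ?E1 = "eval_word X w1" and ?E2 = "eval_word (word_end X w1) w2" and ?Z = "word_end (word_end X w1) w2"
  have k1: "V (lun B (hc ?E2 ?E1)) (asc B (idn B ?Z) ?E2 ?E1) = H (lun B ?E2) (I ?E1)"
    using lun_hcomp[of ?E1 ?E2] w1 w2 by simp
  have "V (inv2 (asc B (idn B ?Z) ?E2 ?E1)) (inv2 (lun B (hc ?E2 ?E1))) = inv2 (H (lun B ?E2) (I ?E1))"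
    by (rule inv2_eqI[OF k1]) (insert w1 w2, simp_all)
  then have k1': "V (inv2 (asc B (idn B ?Z) ?E2 ?E1)) (inv2 (lun B (hc ?E2 ?E1))) = H (inv2 (lun B ?E2)) (I ?E1)"
    using w1 w2 by (simp add: inv2_hcomp2)
  have n: "V (concat_iso X w1 w2) (lun B (eval_word X (w1 @ w2))) = V (lun B (hc ?E2 ?E1)) (H (I (idn B ?Z)) (concat_iso X w1 w2))"
    using lun_natural[of "concat_iso X w1 w2"] w1 w2 by simp
  have e1: "V (H (I (idn B ?Z)) (concat_iso X w1 w2)) (inv2 (lun B (eval_word X (w1 @ w2)))) = V (inv2 (lun B (hc ?E2 ?E1))) (concat_iso X w1 w2)"
    by (rule vcomp_inv2_swap[OF n]) (insert w1 w2, simp_all)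
  have "V (asc B (idn B ?Z) ?E2 ?E1) (V (H (inv2 (lun B ?E2)) (I ?E1)) (concat_iso X w1 w2))
     = V (asc B (idn B ?Z) ?E2 ?E1) (V (V (inv2 (asc B (idn B ?Z) ?E2 ?E1)) (inv2 (lun B (hc ?E2 ?E1)))) (concat_iso X w1 w2))"
    using k1' by simp
  also have "\<dots> = V (inv2 (lun B (hc ?E2 ?E1))) (concat_iso X w1 w2)"
    using w1 w2 by (simp add: vcomp_assoc)
  also have "\<dots> = V (H (I (idn B ?Z)) (concat_iso X w1 w2)) (inv2 (lun B (eval_word X (w1 @ w2))))"
    using e1 by simp
  finally show ?thesis .
qed

lemma eval_word_Cons: "v \<noteq> [] \<Longrightarrow> eval_word X (x # v) = hc (eval_word (letter_tgt x) v) (letter_arr x)" by simp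
lemma eval_word_single: "eval_word X [x] = letter_arr x" by simp
lemma concat_iso_single: "w2 \<noteq> [] \<Longrightarrow> concat_iso X [x] w2 = I (hc (eval_word (letter_tgt x) w2) (letter_arr x))" by simp
lemma concat_iso_Cons: "v \<noteq> [] \<Longrightarrow> w2 \<noteq> [] \<Longrightarrow>
   concat_iso X (x # v) w2 = V (asc B (eval_word (word_end (letter_tgt x) v) w2) (eval_word (letter_tgt x) v) (letter_arr x)) (H (concat_iso (letter_tgt x) v w2) (I (letter_arr x)))"
  by (cases v) auto

lemma concat_iso_assoc_Cons:
  assumes ty: "fst x \<in> Arr B" "wf_word (letter_tgt x) v" "v \<noteq> []" "w2 \<noteq> []" "w3 \<noteq> []"
      "wf_word (word_end (letter_tgt x) v) w2" "wf_word (word_end (word_end (letter_tgt x) v) w2) w3"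
    and IH: "V (asc B (eval_word (word_end (word_end (letter_tgt x) v) w2) w3) (eval_word (word_end (letter_tgt x) v) w2) (eval_word (letter_tgt x) v))
        (V (H (concat_iso (word_end (letter_tgt x) v) w2 w3) (I (eval_word (letter_tgt x) v))) (concat_iso (letter_tgt x) v (w2 @ w3)))
      = V (H (I (eval_word (word_end (word_end (letter_tgt x) v) w2) w3)) (concat_iso (letter_tgt x) v w2)) (concat_iso (letter_tgt x) (v @ w2) w3)"
  shows "V (asc B (eval_word (word_end (word_end X (x # v)) w2) w3) (eval_word (word_end X (x # v)) w2) (eval_word X (x # v)))
      (V (H (concat_iso (word_end X (x # v)) w2 w3) (I (eval_word X (x # v)))) (concat_iso X (x # v) (w2 @ w3)))
    = V (H (I (eval_word (word_end (word_end X (x # v)) w2) w3)) (concat_iso X (x # v) w2)) (concat_iso X ((x # v) @ w2) w3)"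
proof -
  let ?x = "letter_arr x" and ?L = "letter_tgt x"
  let ?Y = "word_end (letter_tgt x) v"
  let ?Ev = "eval_word (letter_tgt x) v" and ?E2 = "eval_word (word_end (letter_tgt x) v) w2" and ?E3 = "eval_word (word_end (word_end (letter_tgt x) v) w2) w3"
  let ?E23 = "eval_word (word_end (letter_tgt x) v) (w2 @ w3)"
  let ?k23 = "concat_iso ?Y w2 w3" and ?kv23 = "concat_iso ?L v (w2 @ w3)" and ?kv2 = "concat_iso ?L v w2" and ?kv2_3 = "concat_iso ?L (v @ w2) w3"
  let ?A = "asc B ?E3 ?E2 (hc ?Ev ?x)" and ?W = "H ?kv23 (I ?x)"
  have inst1: "V (H ?k23 (I (hc ?Ev ?x))) (asc B ?E23 ?Ev ?x) = V (asc B (hc ?E3 ?E2) ?Ev ?x) (H (H ?k23 (I ?Ev)) (I ?x))"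
    using asc_natural[of "I ?x" "I ?Ev" ?k23] ty by simp
  have inst2: "V (asc B ?E3 ?E2 (hc ?Ev ?x)) (asc B (hc ?E3 ?E2) ?Ev ?x) = V (H (I ?E3) (asc B ?E2 ?Ev ?x)) (V (asc B ?E3 (hc ?E2 ?Ev) ?x) (H (asc B ?E3 ?E2 ?Ev) (I ?x)))"
    using pentagon[of ?x ?Ev ?E2 ?E3] ty by simp
  have inst3: "V (H (asc B ?E3 ?E2 ?Ev) (I ?x)) (V (H (H ?k23 (I ?Ev)) (I ?x)) (H ?kv23 (I ?x))) = H (V (asc B ?E3 ?E2 ?Ev) (V (H ?k23 (I ?Ev)) ?kv23)) (I ?x)"
    using ty by (simp add: hcomp2_vcomp_vid)
  have inst4: "H (V (H (I ?E3) ?kv2) ?kv2_3) (I ?x) = V (H (H (I ?E3) ?kv2) (I ?x)) (H ?kv2_3 (I ?x))"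
    using ty by (simp add: hcomp2_vcomp_vid)
  have inst5: "V (asc B ?E3 (hc ?E2 ?Ev) ?x) (H (H (I ?E3) ?kv2) (I ?x)) = V (H (I ?E3) (H ?kv2 (I ?x))) (asc B ?E3 (eval_word ?L (v @ w2)) ?x)"
    using asc_natural[of "I ?x" ?kv2 "I ?E3"] ty by simp
  have inst6: "V (H (I ?E3) (asc B ?E2 ?Ev ?x)) (H (I ?E3) (H ?kv2 (I ?x))) = H (I ?E3) (V (asc B ?E2 ?Ev ?x) (H ?kv2 (I ?x)))"
    using ty by (simp add: hcomp2_vid_vcomp)
  have "V (asc B ?E3 ?E2 (eval_word X (x # v))) (V (H ?k23 (I (eval_word X (x # v)))) (concat_iso X (x # v) (w2 @ w3)))
      = V ?A (V (H ?k23 (I (hc ?Ev ?x))) (V (asc B ?E23 ?Ev ?x) ?W))"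
    using ty by (simp only: eval_word_Cons concat_iso_Cons append_is_Nil_conv word_end_append simp_thms)
  also have "\<dots> = V ?A (V (V (H ?k23 (I (hc ?Ev ?x))) (asc B ?E23 ?Ev ?x)) ?W)"
    using ty by (simp add: vcomp_assoc)
  also have "\<dots> = V ?A (V (V (asc B (hc ?E3 ?E2) ?Ev ?x) (H (H ?k23 (I ?Ev)) (I ?x))) ?W)"
    by (simp only: inst1)
  also have "\<dots> = V (V ?A (asc B (hc ?E3 ?E2) ?Ev ?x)) (V (H (H ?k23 (I ?Ev)) (I ?x)) ?W)"
    using ty by (simp add: vcomp_assoc)
  also have "\<dots> = V (V (H (I ?E3) (asc B ?E2 ?Ev ?x)) (V (asc B ?E3 (hc ?E2 ?Ev) ?x) (H (asc B ?E3 ?E2 ?Ev) (I ?x)))) (V (H (H ?k23 (I ?Ev)) (I ?x)) ?W)"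
    by (simp only: inst2)
  also have "\<dots> = V (H (I ?E3) (asc B ?E2 ?Ev ?x)) (V (asc B ?E3 (hc ?E2 ?Ev) ?x) (V (H (asc B ?E3 ?E2 ?Ev) (I ?x)) (V (H (H ?k23 (I ?Ev)) (I ?x)) (H ?kv23 (I ?x)))))"
    using ty by (simp add: vcomp_assoc)
  also have "\<dots> = V (H (I ?E3) (asc B ?E2 ?Ev ?x)) (V (asc B ?E3 (hc ?E2 ?Ev) ?x) (H (V (asc B ?E3 ?E2 ?Ev) (V (H ?k23 (I ?Ev)) ?kv23)) (I ?x)))"
    by (simp only: inst3)
  also have "\<dots> = V (H (I ?E3) (asc B ?E2 ?Ev ?x)) (V (asc B ?E3 (hc ?E2 ?Ev) ?x) (H (V (H (I ?E3) ?kv2) ?kv2_3) (I ?x)))"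
    by (simp only: IH)
  also have "\<dots> = V (H (I ?E3) (asc B ?E2 ?Ev ?x)) (V (asc B ?E3 (hc ?E2 ?Ev) ?x) (V (H (H (I ?E3) ?kv2) (I ?x)) (H ?kv2_3 (I ?x))))"
    by (simp only: inst4)
  also have "\<dots> = V (H (I ?E3) (asc B ?E2 ?Ev ?x)) (V (V (asc B ?E3 (hc ?E2 ?Ev) ?x) (H (H (I ?E3) ?kv2) (I ?x))) (H ?kv2_3 (I ?x)))"
    using ty by (simp add: vcomp_assoc)
  also have "\<dots> = V (H (I ?E3) (asc B ?E2 ?Ev ?x)) (V (V (H (I ?E3) (H ?kv2 (I ?x))) (asc B ?E3 (eval_word ?L (v @ w2)) ?x)) (H ?kv2_3 (I ?x)))"
    by (simp only: inst5)
  also have "\<dots> = V (V (H (I ?E3) (asc B ?E2 ?Ev ?x)) (H (I ?E3) (H ?kv2 (I ?x)))) (V (asc B ?E3 (eval_word ?L (v @ w2)) ?x) (H ?kv2_3 (I ?x)))"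
    using ty by (simp add: vcomp_assoc)
  also have "\<dots> = V (H (I ?E3) (V (asc B ?E2 ?Ev ?x) (H ?kv2 (I ?x)))) (V (asc B ?E3 (eval_word ?L (v @ w2)) ?x) (H ?kv2_3 (I ?x)))"
    by (simp only: inst6)
  also have "\<dots> = V (H (I ?E3) (concat_iso X (x # v) w2)) (concat_iso X ((x # v) @ w2) w3)"
    using ty by (simp only: concat_iso_Cons append_Cons append_is_Nil_conv word_end_append simp_thms)
  finally show ?thesis by simp
qed

lemma concat_iso_assoc_nonempty: "w1 \<noteq> [] \<Longrightarrow> w2 \<noteq> [] \<Longrightarrow> w3 \<noteq> [] \<Longrightarrow> wf_word X w1 \<Longrightarrow> wf_word (word_end X w1) w2 \<Longrightarrow> wf_word (word_end (word_end X w1) w2) w3 \<Longrightarrow>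
  V (asc B (eval_word (word_end (word_end X w1) w2) w3) (eval_word (word_end X w1) w2) (eval_word X w1)) (V (H (concat_iso (word_end X w1) w2 w3) (I (eval_word X w1))) (concat_iso X w1 (w2 @ w3)))
  = V (H (I (eval_word (word_end (word_end X w1) w2) w3)) (concat_iso X w1 w2)) (concat_iso X (w1 @ w2) w3)"
proof (induction w1 arbitrary: X)
  case Nil then show ?case by simp
next
  case (Cons x v)
  note ne2 = \<open>w2 \<noteq> []\<close> and ne3 = \<open>w3 \<noteq> []\<close>
  have wx: "fst x \<in> Arr B" "letter_src x = X" "wf_word (letter_tgt x) v" using Cons.prems by auto
  have w2: "wf_word (word_end (letter_tgt x) v) w2" and w3: "wf_word (word_end (word_end (letter_tgt x) v) w2) w3" using Cons.prems by auto
  show ?case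
  proof (cases "v = []")
    case True
    then show ?thesis using wx w2 w3 ne2 ne3
      by (simp del: concat_iso.simps eval_word.simps add: concat_iso_single concat_iso_Cons eval_word.simps(1) eval_word_Cons eval_word_single)
  next
    case False
    from concat_iso_assoc_Cons[OF wx(1) wx(3) False ne2 ne3 w2 w3 Cons.IH[OF False ne2 ne3 wx(3) w2 w3]]
    show ?thesis .
  qed
qed

lemma concat_iso_Nil_right: "wf_word X w1 \<Longrightarrow> concat_iso X w1 [] = inv2 (lun B (eval_word X w1))"
  by (cases "w1 = []") (auto simp: concat_iso_Nil_right_nonempty lun_run_idn)

lemma concat_iso_assoc: assumes w1: "wf_word X w1" and w2: "wf_word (word_end X w1) w2" and w3: "wf_word (word_end (word_end X w1) w2) w3"
  shows "V (asc B (eval_word (word_end (word_end X w1) w2) w3) (eval_word (word_end X w1) w2) (eval_word X w1)) (V (H (concat_iso (word_end X w1) w2 w3) (I (eval_word X w1))) (concat_iso X w1 (w2 @ w3)))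
  = V (H (I (eval_word (word_end (word_end X w1) w2) w3)) (concat_iso X w1 w2)) (concat_iso X (w1 @ w2) w3)"
proof -
  consider "w1 = []" | "w1 \<noteq> []" "w2 = []" | "w1 \<noteq> []" "w2 \<noteq> []" "w3 = []" | "w1 \<noteq> []" "w2 \<noteq> []" "w3 \<noteq> []"
    by blast
  then show ?thesis
  proof cases
    case 1
    then show ?thesis using concat_iso_assoc_Nil_left[of X w2 w3] w1 w2 w3 by simp
  next
    case 2
    then show ?thesis using concat_iso_assoc_Nil_middle[of X w1 w3] w1 w2 w3 by (simp add: concat_iso_Nil_right_nonempty)
  next
    case 3
    then show ?thesis using concat_iso_assoc_Nil_right[of X w1 w2] w1 w2 w3 by (simp add: concat_iso_Nil_right_nonempty)
  next
    case 4
    then show ?thesis using concat_iso_assoc_nonempty[of w1 w2 w3 X] w1 w2 w3 by simp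
  qed
qed

definition isomorphic :: "'a \<Rightarrow> 'a \<Rightarrow> bool" where
  "isomorphic f g \<longleftrightarrow> (\<exists>\<beta>. \<beta> \<in> Cell B \<and> d2 \<beta> = f \<and> c2 \<beta> = g)"

lemma isomorphicI: "\<beta> \<in> Cell B \<Longrightarrow> d2 \<beta> = f \<Longrightarrow> c2 \<beta> = g \<Longrightarrow> isomorphic f g" unfolding isomorphic_def by blast
lemma isomorphic_refl: "f \<in> Arr B \<Longrightarrow> isomorphic f f" by (rule isomorphicI[of "I f"]) auto
lemma isomorphic_sym: "isomorphic f g \<Longrightarrow> isomorphic g f" unfolding isomorphic_def by (metis inv2_cell cod2_inv2 dom2_inv2)
lemma isomorphic_trans[trans]: "isomorphic f g \<Longrightarrow> isomorphic g h \<Longrightarrow> isomorphic f h" unfolding isomorphic_def by (metis vcomp_cell cod2_vcomp dom2_vcomp)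
lemma isomorphic_hcomp: "isomorphic f f' \<Longrightarrow> isomorphic g g' \<Longrightarrow> t f = s g \<Longrightarrow> isomorphic (hc g f) (hc g' f')"
  unfolding isomorphic_def by (metis hcomp2_cell cod2_hcomp2 dom2_hcomp2)
lemma isomorphic_rinv: "isomorphic f g \<Longrightarrow> isomorphic (rinv B f) (rinv B g)" unfolding isomorphic_def by (metis rinv2_cell cod2_rinv2 dom2_rinv2)

lemma isomorphic_asc: "f \<in> Arr B \<Longrightarrow> g \<in> Arr B \<Longrightarrow> h \<in> Arr B \<Longrightarrow> t f = s g \<Longrightarrow> t g = s h \<Longrightarrow> isomorphic (hc (hc h g) f) (hc h (hc g f))"
  by (rule isomorphicI[of "asc B h g f"]) auto
lemma isomorphic_lun: "f \<in> Arr B \<Longrightarrow> isomorphic (hc (idn B (t f)) f) f" by (rule isomorphicI[of "lun B f"]) auto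
lemma isomorphic_run: "f \<in> Arr B \<Longrightarrow> isomorphic (hc f (idn B (s f))) f" by (rule isomorphicI[of "run B f"]) auto
lemma isomorphic_eps: "f \<in> Arr B \<Longrightarrow> isomorphic (hc (rinv B f) f) (idn B (s f))" by (rule isomorphicI[of "eps B f"]) auto
lemma isomorphic_eta: "f \<in> Arr B \<Longrightarrow> isomorphic (idn B (t f)) (hc f (rinv B f))" by (rule isomorphicI[of "eta B f"]) auto

lemma isomorphic_rinvI: assumes h: "h \<in> Arr B" and f: "f \<in> Arr B" and hs: "s h = t f" and ht: "t h = s f"
  and i: "isomorphic (hc h f) (idn B (s f))" shows "isomorphic h (rinv B f)"
proof -
  have "isomorphic h (hc h (idn B (t f)))" using isomorphic_run[OF h] h hs by (simp add: isomorphic_sym)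
  also have "isomorphic \<dots> (hc h (hc f (rinv B f)))" using isomorphic_eta[OF f] h f hs by (intro isomorphic_hcomp isomorphic_refl) auto
  also have "isomorphic \<dots> (hc (hc h f) (rinv B f))" using h f hs ht by (intro isomorphic_sym[OF isomorphic_asc]) auto
  also have "isomorphic \<dots> (hc (idn B (s f)) (rinv B f))" using i h f hs ht by (intro isomorphic_hcomp isomorphic_refl) auto
  also have "isomorphic \<dots> (rinv B f)" using isomorphic_lun[of "rinv B f"] f by simp
  finally show ?thesis .
qed

definition flip :: "'a \<times> bool \<Rightarrow> 'a \<times> bool" where "flip x = (fst x, \<not> snd x)"
definition rev_word :: "('a \<times> bool) list \<Rightarrow> ('a \<times> bool) list" where "rev_word w = rev (map flip w)"

lemma letter_simps[simp]:
  "letter_arr (f, True) = f" "letter_arr (f, False) = rinv B f" "letter_src (f, True) = s f" "letter_src (f, False) = t f"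
  "letter_tgt (f, True) = t f" "letter_tgt (f, False) = s f" "flip (f, b) = (f, \<not> b)"
  by (simp_all add: letter_arr_def letter_src_def letter_tgt_def flip_def)

lemma flip_simps[simp]: "fst (flip x) = fst x" "letter_src (flip x) = letter_tgt x" "letter_tgt (flip x) = letter_src x"
  by (auto simp: flip_def letter_src_def letter_tgt_def)
lemma rev_word_Nil[simp]: "rev_word [] = []" by (simp add: rev_word_def)
lemma rev_word_Cons[simp]: "rev_word (x # v) = rev_word v @ [flip x]" by (simp add: rev_word_def)

lemma rev_word_props: "wf_word X w \<Longrightarrow> wf_word (word_end X w) (rev_word w) \<and> word_end (word_end X w) (rev_word w) = X"
  by (induction w arbitrary: X) auto
lemma wf_word_rev_word[simp]: "wf_word X w \<Longrightarrow> wf_word (word_end X w) (rev_word w)"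
  and word_end_rev_word[simp]: "wf_word X w \<Longrightarrow> word_end (word_end X w) (rev_word w) = X"
  using rev_word_props by blast+

lemma isomorphic_eval_word_append: "wf_word X w1 \<Longrightarrow> wf_word (word_end X w1) w2 \<Longrightarrow> isomorphic (eval_word X (w1 @ w2)) (hc (eval_word (word_end X w1) w2) (eval_word X w1))"
  by (rule isomorphicI[of "concat_iso X w1 w2"]) auto

lemma isomorphic_flip: assumes x: "fst x \<in> Arr B" shows "isomorphic (letter_arr (flip x)) (rinv B (letter_arr x))"
proof (cases "snd x")
  case True
  then show ?thesis using x by (simp add: letter_arr_def flip_def isomorphic_refl)
next
  case False
  have "isomorphic (fst x) (rinv B (rinv B (fst x)))"
    using x isomorphic_sym[OF isomorphic_eta[of "fst x"]] by (intro isomorphic_rinvI) auto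
  then show ?thesis using False by (simp add: letter_arr_def flip_def)
qed

lemma isomorphic_rinv_hcomp: assumes f: "f \<in> Arr B" and g: "g \<in> Arr B" and fg: "t f = s g"
  shows "isomorphic (rinv B (hc g f)) (hc (rinv B f) (rinv B g))"
proof -
  have "isomorphic (hc (hc (rinv B f) (rinv B g)) (hc g f)) (hc (rinv B f) (hc (rinv B g) (hc g f)))"
    using f g fg by (intro isomorphic_asc) auto
  also have "isomorphic \<dots> (hc (rinv B f) (hc (hc (rinv B g) g) f))"
    using f g fg by (intro isomorphic_hcomp isomorphic_refl isomorphic_sym[OF isomorphic_asc]) auto
  also have "isomorphic \<dots> (hc (rinv B f) (hc (idn B (t f)) f))"
    using f g fg isomorphic_eps[of g] by (intro isomorphic_hcomp isomorphic_refl) auto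
  also have "isomorphic \<dots> (hc (rinv B f) f)"
    using f g fg isomorphic_lun[of f] by (intro isomorphic_hcomp isomorphic_refl) auto
  also have "isomorphic \<dots> (idn B (s f))" using isomorphic_eps[of f] f by simp
  finally have "isomorphic (hc (hc (rinv B f) (rinv B g)) (hc g f)) (idn B (s (hc g f)))" using f g fg by simp
  then have "isomorphic (hc (rinv B f) (rinv B g)) (rinv B (hc g f))"
    using f g fg by (intro isomorphic_rinvI) auto
  then show ?thesis by (rule isomorphic_sym)
qed

lemma isomorphic_rinv_eval_word: "wf_word X w \<Longrightarrow> isomorphic (rinv B (eval_word X w)) (eval_word (word_end X w) (rev_word w))"
proof (induction w arbitrary: X)
  case Nil
  have "isomorphic (idn B X) (rinv B (idn B X))"
    using Nil isomorphic_lun[of "idn B X"] by (intro isomorphic_rinvI) auto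
  then show ?case by (simp add: isomorphic_sym)
next
  case (Cons x v)
  have x: "fst x \<in> Arr B" "letter_src x = X" "wf_word (letter_tgt x) v" using Cons.prems by auto
  let ?Z = "word_end (letter_tgt x) v"
  have e: "isomorphic (eval_word X (x # v)) (hc (eval_word (letter_tgt x) v) (letter_arr x))"
    using isomorphic_eval_word_append[of X "[x]" v] x by simp
  have "isomorphic (rinv B (eval_word X (x # v))) (rinv B (hc (eval_word (letter_tgt x) v) (letter_arr x)))" using isomorphic_rinv[OF e] .
  also have "isomorphic \<dots> (hc (rinv B (letter_arr x)) (rinv B (eval_word (letter_tgt x) v)))"
    using x by (intro isomorphic_rinv_hcomp) auto
  also have "isomorphic \<dots> (hc (letter_arr (flip x)) (eval_word ?Z (rev_word v)))"
    using x Cons.IH[OF x(3)] isomorphic_sym[OF isomorphic_flip[of x]] by (intro isomorphic_hcomp) auto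
  also have "isomorphic \<dots> (eval_word ?Z (rev_word v @ [flip x]))"
    using isomorphic_sym[OF isomorphic_eval_word_append[of ?Z "rev_word v" "[flip x]"]] x letter_src_obj[OF x(1)] by simp
  finally show ?case by simp
qed


section \<open>The strictification\<close>

text \<open>Each axiom of \<open>SB\<close> unfolds to one of the following identities in \<open>B\<close> between conjugates by
  comparison cells.\<close>

lemma conj_asc_natural:
  assumes C: "a \<in> Cell B" "b \<in> Cell B" "c \<in> Cell B" "k1 \<in> Cell B" "k23 \<in> Cell B" "k12 \<in> Cell B" "k123 \<in> Cell B"
    "k1' \<in> Cell B" "k23' \<in> Cell B" "k12' \<in> Cell B" "k123' \<in> Cell B"
  and ty: "d2 a = Ea" "c2 a = Ea'" "d2 b = Eb" "c2 b = Eb'" "d2 c = Ec" "c2 c = Ec'"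
    "t Ea = s Eb" "t Eb = s Ec"
    "d2 k1 = Eabc" "c2 k1 = hc Ebc Ea" "d2 k23 = Ebc" "c2 k23 = hc Ec Eb"
    "d2 k12 = Eab" "c2 k12 = hc Eb Ea" "d2 k123 = Eabc" "c2 k123 = hc Ec Eab"
    "d2 k1' = Eabc'" "c2 k1' = hc Ebc' Ea'" "d2 k23' = Ebc'" "c2 k23' = hc Ec' Eb'"
    "d2 k12' = Eab'" "c2 k12' = hc Eb' Ea'" "d2 k123' = Eabc'" "c2 k123' = hc Ec' Eab'"
  and assoc1: "V (asc B Ec Eb Ea) (V (H k23 (I Ea)) k1) = V (H (I Ec) k12) k123"
  and assoc2: "V (asc B Ec' Eb' Ea') (V (H k23' (I Ea')) k1') = V (H (I Ec') k12') k123'"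
  shows "V (inv2 k1') (V (H (V (inv2 k23') (V (H c b) k23)) a) k1) = V (inv2 k123') (V (H c (V (inv2 k12') (V (H b a) k12))) k123)"
proof -
  have A: "Ea \<in> Arr B" "Ea' \<in> Arr B" "Eb \<in> Arr B" "Eb' \<in> Arr B" "Ec \<in> Arr B" "Ec' \<in> Arr B"
    "Eabc \<in> Arr B" "Ebc \<in> Arr B" "Eab \<in> Arr B" "Eabc' \<in> Arr B" "Ebc' \<in> Arr B" "Eab' \<in> Arr B"
    using dom2_arr[OF C(1)] cod2_arr[OF C(1)] dom2_arr[OF C(2)] cod2_arr[OF C(2)] dom2_arr[OF C(3)] cod2_arr[OF C(3)]
     dom2_arr[OF C(4)] dom2_arr[OF C(5)] dom2_arr[OF C(6)] dom2_arr[OF C(8)] dom2_arr[OF C(9)] dom2_arr[OF C(10)]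
    by (simp_all only: ty)
  have st: "t Ea' = t Ea" "t Eb' = t Eb" "s Eb' = s Eb" "s Ec' = s Ec"
    using tgt_cod2[OF C(1)] tgt_cod2[OF C(2)] src_cod2[OF C(2)] src_cod2[OF C(3)] ty by simp_all
  have e12: "t Eab = t Eb" "s Eab = s Ea" using tgt_cod2[OF C(6)] src_cod2[OF C(6)] ty(13,14) ty(7) A by auto
  have e23: "t Ebc = t Ec" "s Ebc = s Eb" using tgt_cod2[OF C(5)] src_cod2[OF C(5)] ty(11,12) ty(8) A by auto
  have e123: "t Eabc = t Ec" "s Eabc = s Ea" using tgt_cod2[OF C(4)] src_cod2[OF C(4)] ty(9,10) ty(7) e23 A by auto
  have e12': "t Eab' = t Eb'" "s Eab' = s Ea'" using tgt_cod2[OF C(10)] src_cod2[OF C(10)] ty(21,22) ty(7) st A by auto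
  have e23': "t Ebc' = t Ec'" "s Ebc' = s Eb'" using tgt_cod2[OF C(9)] src_cod2[OF C(9)] ty(19,20) ty(8) st A by auto
  have e123': "t Eabc' = t Ec'" "s Eabc' = s Ea'" using tgt_cod2[OF C(8)] src_cod2[OF C(8)] ty(17,18) ty(7) st e23' A by auto
  note st2 = e12 e23 e123
  note st3 = e12' e23' e123'
  note T = C ty A st st2 st3
  let ?P = "V (asc B Ec' Eb' Ea') (V (H k23' (I Ea')) k1')"
  let ?Q = "V (asc B Ec Eb Ea) (V (H k23 (I Ea)) k1)"
  let ?X = "V (inv2 k1') (V (H (V (inv2 k23') (V (H c b) k23)) a) k1)"
  let ?Y = "V (inv2 k123') (V (H c (V (inv2 k12') (V (H b a) k12))) k123)"
  have i1: "V (H (I Ec') k12') (H c (V (inv2 k12') (V (H b a) k12))) = H (V (I Ec') c) (V k12' (V (inv2 k12') (V (H b a) k12)))"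
    using T by (intro interchange[symmetric]) auto
  have i2: "H c (V (H b a) k12) = V (H c (H b a)) (H (I Ec) k12)"
    using T interchange[of k12 "H b a" "I Ec" c] by simp
  have eY: "V ?P ?Y = V (H c (H b a)) (V (H (I Ec) k12) k123)"
  proof -
    have "V ?P ?Y = V (V (H (I Ec') k12') k123') ?Y" using assoc2 by simp
    also have "\<dots> = V (H (I Ec') k12') (V k123' (V (inv2 k123') (V (H c (V (inv2 k12') (V (H b a) k12))) k123)))"
      using T by (simp add: vcomp_assoc)
    also have "\<dots> = V (V (H (I Ec') k12') (H c (V (inv2 k12') (V (H b a) k12)))) k123"
      using T by (simp add: vcomp_assoc)
    also have "\<dots> = V (H (V (I Ec') c) (V k12' (V (inv2 k12') (V (H b a) k12)))) k123"
      by (simp only: i1)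
    also have "\<dots> = V (H c (V (H b a) k12)) k123" using T by simp
    also have "\<dots> = V (V (H c (H b a)) (H (I Ec) k12)) k123" by (simp only: i2)
    also have "\<dots> = V (H c (H b a)) (V (H (I Ec) k12) k123)" using T by (simp add: vcomp_assoc)
    finally show ?thesis .
  qed
  have j1: "V (H k23' (I Ea')) (H (V (inv2 k23') (V (H c b) k23)) a) = H (V k23' (V (inv2 k23') (V (H c b) k23))) (V (I Ea') a)"
    using T by (intro interchange[symmetric]) auto
  have j2: "H (V (H c b) k23) a = V (H (H c b) a) (H k23 (I Ea))"
    using T interchange[of "I Ea" a k23 "H c b"] by simp
  have j3: "V (asc B Ec' Eb' Ea') (H (H c b) a) = V (H c (H b a)) (asc B Ec Eb Ea)"
    using T asc_natural[of a b c] by simp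
  have eX: "V ?P ?X = V (H c (H b a)) ?Q"
  proof -
    have "V ?P ?X = V (asc B Ec' Eb' Ea') (V (H k23' (I Ea')) (V k1' (V (inv2 k1') (V (H (V (inv2 k23') (V (H c b) k23)) a) k1))))"
      using T by (simp add: vcomp_assoc)
    also have "\<dots> = V (asc B Ec' Eb' Ea') (V (V (H k23' (I Ea')) (H (V (inv2 k23') (V (H c b) k23)) a)) k1)"
      using T by (simp add: vcomp_assoc)
    also have "\<dots> = V (asc B Ec' Eb' Ea') (V (H (V k23' (V (inv2 k23') (V (H c b) k23))) (V (I Ea') a)) k1)"
      by (simp only: j1)
    also have "\<dots> = V (asc B Ec' Eb' Ea') (V (H (V (H c b) k23) a) k1)" using T by simp
    also have "\<dots> = V (asc B Ec' Eb' Ea') (V (V (H (H c b) a) (H k23 (I Ea))) k1)" by (simp only: j2)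
    also have "\<dots> = V (V (asc B Ec' Eb' Ea') (H (H c b) a)) (V (H k23 (I Ea)) k1)" using T by (simp add: vcomp_assoc)
    also have "\<dots> = V (V (H c (H b a)) (asc B Ec Eb Ea)) (V (H k23 (I Ea)) k1)" by (simp only: j3)
    also have "\<dots> = V (H c (H b a)) ?Q" using T by (simp add: vcomp_assoc)
    finally show ?thesis .
  qed
  have "V ?P ?X = V ?P ?Y" using eX eY assoc1 by simp
  then show ?thesis by (rule vcomp_cancel_left[rotated 5]) (use T in simp_all)
qed

lemma conj_eps_natural:
  assumes C: "a \<in> Cell B" "pf \<in> Cell B" "pg \<in> Cell B" "kf \<in> Cell B" "kg \<in> Cell B"
  and ty: "d2 a = F" "c2 a = G" "d2 pf = rinv B F" "c2 pf = Fs" "d2 pg = rinv B G" "c2 pg = Gs"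
     "c2 kf = hc Fs F" "c2 kg = hc Gs G"
  shows "V (V (eps B G) (V (H (inv2 pg) (I G)) kg)) (V (inv2 kg) (V (H (V pg (V (rinv2 B a) (inv2 pf))) a) kf))
       = V (eps B F) (V (H (inv2 pf) (I F)) kf)"
proof -
  have A: "F \<in> Arr B" "G \<in> Arr B" using dom2_arr[OF C(1)] cod2_arr[OF C(1)] by (simp_all only: ty)
  have st: "s G = s F" "t G = t F" using src_cod2[OF C(1)] tgt_cod2[OF C(1)] by (simp_all only: ty)
  have sF: "s Fs = t F" "t Fs = s F" using src_cod2[OF C(2)] tgt_cod2[OF C(2)] A by (simp_all add: ty)
  have sG: "s Gs = t G" "t Gs = s G" using src_cod2[OF C(3)] tgt_cod2[OF C(3)] A by (simp_all add: ty)
  note T = C ty A st sF sG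
  let ?M = "V pg (V (rinv2 B a) (inv2 pf))"
  have i1: "V (H (inv2 pg) (I G)) (H ?M a) = H (V (inv2 pg) ?M) (V (I G) a)"
    using T by (intro interchange[symmetric]) auto
  have i2: "H (V (rinv2 B a) (inv2 pf)) a = V (H (rinv2 B a) a) (H (inv2 pf) (I F))"
    using T interchange[of "I F" a "inv2 pf" "rinv2 B a"] by simp
  have i3: "V (eps B G) (H (rinv2 B a) a) = eps B F" using eps_natural[of a] T by simp
  have "V (V (eps B G) (V (H (inv2 pg) (I G)) kg)) (V (inv2 kg) (V (H ?M a) kf))
      = V (eps B G) (V (H (inv2 pg) (I G)) (V kg (V (inv2 kg) (V (H ?M a) kf))))"
    using T by (simp add: vcomp_assoc)
  also have "\<dots> = V (eps B G) (V (V (H (inv2 pg) (I G)) (H ?M a)) kf)"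
    using T by (simp add: vcomp_assoc)
  also have "\<dots> = V (eps B G) (V (H (V (inv2 pg) ?M) (V (I G) a)) kf)" by (simp only: i1)
  also have "\<dots> = V (eps B G) (V (H (V (rinv2 B a) (inv2 pf)) a) kf)" using T by simp
  also have "\<dots> = V (eps B G) (V (V (H (rinv2 B a) a) (H (inv2 pf) (I F))) kf)" by (simp only: i2)
  also have "\<dots> = V (V (eps B G) (H (rinv2 B a) a)) (V (H (inv2 pf) (I F)) kf)" using T by (simp add: vcomp_assoc)
  also have "\<dots> = V (eps B F) (V (H (inv2 pf) (I F)) kf)" by (simp only: i3)
  finally show ?thesis .
qed

lemma conj_eta_natural:
  assumes C: "a \<in> Cell B" "pf \<in> Cell B" "pg \<in> Cell B" "mf \<in> Cell B" "mg \<in> Cell B"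
  and ty: "d2 a = F" "c2 a = G" "d2 pf = rinv B F" "c2 pf = Fs" "d2 pg = rinv B G" "c2 pg = Gs"
     "c2 mf = hc F Fs" "c2 mg = hc G Gs"
  shows "V (V (inv2 mg) (V (H a (V pg (V (rinv2 B a) (inv2 pf)))) mf)) (V (inv2 mf) (V (H (I F) pf) (eta B F)))
       = V (inv2 mg) (V (H (I G) pg) (eta B G))"
proof -
  have A: "F \<in> Arr B" "G \<in> Arr B" using dom2_arr[OF C(1)] cod2_arr[OF C(1)] by (simp_all only: ty)
  have st: "s G = s F" "t G = t F" using src_cod2[OF C(1)] tgt_cod2[OF C(1)] by (simp_all only: ty)
  have sF: "s Fs = t F" "t Fs = s F" using src_cod2[OF C(2)] tgt_cod2[OF C(2)] A by (simp_all add: ty)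
  have sG: "s Gs = t G" "t Gs = s G" using src_cod2[OF C(3)] tgt_cod2[OF C(3)] A by (simp_all add: ty)
  note T = C ty A st sF sG
  let ?N = "V pg (V (rinv2 B a) (inv2 pf))"
  have i1: "V (H a ?N) (H (I F) pf) = H (V a (I F)) (V ?N pf)"
    using T by (intro interchange[symmetric]) auto
  have i0: "V ?N pf = V pg (rinv2 B a)" using T by (simp add: vcomp_assoc)
  have i2: "H a (V pg (rinv2 B a)) = V (H (I G) pg) (H a (rinv2 B a))"
    using T interchange[of "rinv2 B a" pg a "I G"] by simp
  have i3: "V (H a (rinv2 B a)) (eta B F) = eta B G" using eta_natural[of a] T by simp
  have "V (V (inv2 mg) (V (H a ?N) mf)) (V (inv2 mf) (V (H (I F) pf) (eta B F)))
      = V (inv2 mg) (V (H a ?N) (V mf (V (inv2 mf) (V (H (I F) pf) (eta B F)))))"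
    using T by (simp add: vcomp_assoc)
  also have "\<dots> = V (inv2 mg) (V (V (H a ?N) (H (I F) pf)) (eta B F))"
    using T by (simp add: vcomp_assoc)
  also have "\<dots> = V (inv2 mg) (V (H (V a (I F)) (V ?N pf)) (eta B F))" by (simp only: i1)
  also have "\<dots> = V (inv2 mg) (V (H a (V pg (rinv2 B a))) (eta B F))" using T i0 by simp
  also have "\<dots> = V (inv2 mg) (V (V (H (I G) pg) (H a (rinv2 B a))) (eta B F))" by (simp only: i2)
  also have "\<dots> = V (inv2 mg) (V (H (I G) pg) (V (H a (rinv2 B a)) (eta B F)))" using T by (simp add: vcomp_assoc)
  also have "\<dots> = V (inv2 mg) (V (H (I G) pg) (eta B G))" by (simp only: i3)
  finally show ?thesis .
qed

lemma conj_zigzag: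
  assumes C: "ps \<in> Cell B" "kA \<in> Cell B" "kB \<in> Cell B" "kC \<in> Cell B" "kD \<in> Cell B" and F: "F \<in> Arr B"
  and ty: "d2 ps = rinv B F" "c2 ps = Fs" "c2 kA = hc Fs F" "c2 kB = hc F Fs" "d2 kC = EC" "c2 kC = hc EB F"
     "d2 kB = EB" "d2 kA = EA" "d2 kD = EC" "c2 kD = hc F EA"
  and assoc: "V (asc B F Fs F) (V (H kB (I F)) kC) = V (H (I F) kA) kD"
  shows "V (run B F) (V (H (I F) (V (eps B F) (V (H (inv2 ps) (I F)) kA))) (V kD (V (inv2 kC) (V (H (V (inv2 kB) (V (H (I F) ps) (eta B F))) (I F)) (inv2 (lun B F))))))
     = I F"
proof -
  have sF: "s Fs = t F" "t Fs = s F" using src_cod2[OF C(1)] tgt_cod2[OF C(1)] F by (simp_all add: ty)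
  have A: "Fs \<in> Arr B" "EA \<in> Arr B" "EB \<in> Arr B" "EC \<in> Arr B" using cod2_arr[OF C(1)] dom2_arr[OF C(2)] dom2_arr[OF C(3)] dom2_arr[OF C(4)] by (simp_all only: ty)
  have sA: "s EA = s F" "t EA = s F" using src_cod2[OF C(2)] tgt_cod2[OF C(2)] F A sF by (simp_all add: ty)
  have sB: "s EB = t F" "t EB = t F" using src_cod2[OF C(3)] tgt_cod2[OF C(3)] F A sF by (simp_all add: ty)
  have sC: "s EC = s F" "t EC = t F" using src_cod2[OF C(4)] tgt_cod2[OF C(4)] F A sF sB by (simp_all add: ty)
  note T = C F ty sF A sA sB sC
  let ?e = "V (eps B F) (V (H (inv2 ps) (I F)) kA)" and ?n = "V (inv2 kB) (V (H (I F) ps) (eta B F))"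
  let ?R = "V (H ?n (I F)) (inv2 (lun B F))"
  have kD: "kD = V (inv2 (H (I F) kA)) (V (asc B F Fs F) (V (H kB (I F)) kC))"
    by (rule vcomp_solve_left[OF assoc[symmetric]]) (use T in simp_all)
  have s1: "V kD (V (inv2 kC) ?R) = V (inv2 (H (I F) kA)) (V (asc B F Fs F) (V (H kB (I F)) ?R))"
    unfolding kD using T by (simp add: vcomp_assoc)
  have s2: "V (H (I F) ?e) (inv2 (H (I F) kA)) = H (I F) (V (eps B F) (H (inv2 ps) (I F)))"
  proof -
    have "V (H (I F) ?e) (inv2 (H (I F) kA)) = V (H (I F) ?e) (H (I F) (inv2 kA))" using T by (simp add: inv2_hcomp2)
    also have "\<dots> = H (V (I F) (I F)) (V ?e (inv2 kA))" using T by (intro interchange[symmetric]) auto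
    also have "\<dots> = H (I F) (V (eps B F) (H (inv2 ps) (I F)))" using T by (simp add: vcomp_assoc)
    finally show ?thesis .
  qed
  have s3: "V (H kB (I F)) ?R = V (H (H (I F) ps) (I F)) (V (H (eta B F) (I F)) (inv2 (lun B F)))"
  proof -
    have "V (H kB (I F)) ?R = V (V (H kB (I F)) (H ?n (I F))) (inv2 (lun B F))" using T by (simp add: vcomp_assoc)
    also have "V (H kB (I F)) (H ?n (I F)) = H (V kB ?n) (V (I F) (I F))" using T by (intro interchange[symmetric]) auto
    also have "\<dots> = V (H (H (I F) ps) (I F)) (H (eta B F) (I F))" using T interchange[of "I F" "I F" "eta B F" "H (I F) ps"] by simp
    finally show ?thesis using T by (simp add: vcomp_assoc)
  qed
  have s4: "V (asc B F Fs F) (H (H (I F) ps) (I F)) = V (H (I F) (H ps (I F))) (asc B F (rinv B F) F)"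
    using asc_natural[of "I F" ps "I F"] T by simp
  have s5: "V (H (I F) (V (eps B F) (H (inv2 ps) (I F)))) (H (I F) (H ps (I F))) = H (I F) (eps B F)"
  proof -
    have "V (H (I F) (V (eps B F) (H (inv2 ps) (I F)))) (H (I F) (H ps (I F))) = H (V (I F) (I F)) (V (V (eps B F) (H (inv2 ps) (I F))) (H ps (I F)))"
      using T by (intro interchange[symmetric]) auto
    also have "\<dots> = H (I F) (V (eps B F) (V (H (inv2 ps) (I F)) (H ps (I F))))" using T by (simp add: vcomp_assoc)
    also have "V (H (inv2 ps) (I F)) (H ps (I F)) = H (V (inv2 ps) ps) (V (I F) (I F))" using T by (intro interchange[symmetric]) auto
    finally show ?thesis using T by simp
  qed
  have z: "V (run B F) (V (H (I F) (eps B F)) (V (asc B F (rinv B F) F) (H (eta B F) (I F)))) = lun B F"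
    using zigzag[OF F] .
  have "V (run B F) (V (H (I F) ?e) (V kD (V (inv2 kC) ?R)))
     = V (run B F) (V (H (I F) ?e) (V (inv2 (H (I F) kA)) (V (asc B F Fs F) (V (H (H (I F) ps) (I F)) (V (H (eta B F) (I F)) (inv2 (lun B F)))))))"
    by (simp only: s1 s3)
  also have "\<dots> = V (run B F) (V (V (H (I F) ?e) (inv2 (H (I F) kA))) (V (V (asc B F Fs F) (H (H (I F) ps) (I F))) (V (H (eta B F) (I F)) (inv2 (lun B F)))))"
    using T by (simp add: vcomp_assoc)
  also have "\<dots> = V (run B F) (V (H (I F) (V (eps B F) (H (inv2 ps) (I F)))) (V (V (H (I F) (H ps (I F))) (asc B F (rinv B F) F)) (V (H (eta B F) (I F)) (inv2 (lun B F)))))"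
    by (simp only: s2 s4)
  also have "\<dots> = V (run B F) (V (V (H (I F) (V (eps B F) (H (inv2 ps) (I F)))) (H (I F) (H ps (I F)))) (V (asc B F (rinv B F) F) (V (H (eta B F) (I F)) (inv2 (lun B F)))))"
    using T by (simp add: vcomp_assoc)
  also have "\<dots> = V (run B F) (V (H (I F) (eps B F)) (V (asc B F (rinv B F) F) (V (H (eta B F) (I F)) (inv2 (lun B F)))))"
    by (simp only: s5)
  also have "\<dots> = V (V (run B F) (V (H (I F) (eps B F)) (V (asc B F (rinv B F) F) (H (eta B F) (I F))))) (inv2 (lun B F))"
    using T by (simp add: vcomp_assoc)
  also have "\<dots> = I F" using z T by simp
  finally show ?thesis .
qed

text \<open>A 1-cell is a triple \<open>(X, w, Y)\<close>; the source \<open>X\<close> is needed for the empty word, and the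
  redundant target \<open>Y = word_end X w\<close> makes \<open>tgt\<close> a projection.\<close>

fun Eval :: "('o, 'a) word_arr \<Rightarrow> 'a" where
  "Eval (X, w, Y) = eval_word X w"

definition SArr :: "('o, 'a) word_arr set" where
  "SArr = {(X, w, Y). wf_word X w \<and> Y = word_end X w}"

definition SCell :: "('o, 'a, 'b) word_cell set" where
  "SCell = {((X, w, Y), b, (X', w', Y')). (X, w, Y) \<in> SArr \<and> (X', w', Y') \<in> SArr \<and> X = X' \<and> Y = Y' \<and>
      b \<in> hom2 B (eval_word X w) (eval_word X' w')}"

fun Shcomp :: "('o, 'a) word_arr \<Rightarrow> ('o, 'a) word_arr \<Rightarrow> ('o, 'a) word_arr" where
  "Shcomp (Y', w2, Z) (X, w1, Y) = (X, w1 @ w2, Z)"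

fun Sconcat_iso :: "('o, 'a) word_arr \<Rightarrow> ('o, 'a) word_arr \<Rightarrow> 'b" where
  "Sconcat_iso (X, w1, Y) (Y', w2, Z) = concat_iso X w1 w2"

fun Svcomp :: "('o, 'a, 'b) word_cell \<Rightarrow> ('o, 'a, 'b) word_cell \<Rightarrow> ('o, 'a, 'b) word_cell" where
  "Svcomp (v', b, w) (u, a, v) = (u, V b a, w)"

fun Svid :: "('o, 'a) word_arr \<Rightarrow> ('o, 'a, 'b) word_cell" where
  "Svid (X, w, Y) = ((X, w, Y), I (eval_word X w), (X, w, Y))"

fun Shcomp2 :: "('o, 'a, 'b) word_cell \<Rightarrow> ('o, 'a, 'b) word_cell \<Rightarrow> ('o, 'a, 'b) word_cell" where
  "Shcomp2 (g, b, g') (f, a, f') =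
     (Shcomp g f, V (inv2 (Sconcat_iso f' g')) (V (H b a) (Sconcat_iso f g)), Shcomp g' f')"

definition Sidn :: "'o \<Rightarrow> ('o, 'a) word_arr" where
  [simp]: "Sidn X = (X, [], X)"

fun Srinv :: "('o, 'a) word_arr \<Rightarrow> ('o, 'a) word_arr" where
  "Srinv (X, w, Y) = (Y, rev_word w, X)"

text \<open>A chosen 2-cell \<open>(eval w)\<^sup>* \<Rightarrow> eval (rev_word w)\<close>. It is taken to be an identity whenever the two
  1-cells coincide, which is the case for one-letter words; this makes \<open>Smor\<close> below a strict
  morphism on inverses.\<close>

definition rinv_iso :: "('o, 'a) word_arr \<Rightarrow> 'b" where
  "rinv_iso u = (if rinv B (Eval u) = Eval (Srinv u) then I (rinv B (Eval u))
     else (SOME \<beta>. \<beta> \<in> hom2 B (rinv B (Eval u)) (Eval (Srinv u))))"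

fun Srinv2 :: "('o, 'a, 'b) word_cell \<Rightarrow> ('o, 'a, 'b) word_cell" where
  "Srinv2 (u, a, v) = (Srinv u, V (rinv_iso v) (V (rinv2 B a) (inv2 (rinv_iso u))), Srinv v)"

definition Sasc :: "('o, 'a) word_arr \<Rightarrow> ('o, 'a) word_arr \<Rightarrow> ('o, 'a) word_arr \<Rightarrow> ('o, 'a, 'b) word_cell" where
  [simp]: "Sasc h g f = Svid (Shcomp (Shcomp h g) f)"

fun Seps :: "('o, 'a) word_arr \<Rightarrow> ('o, 'a, 'b) word_cell" where
  "Seps (X, w, Y) = ((X, w @ rev_word w, X),
     V (eps B (eval_word X w)) (V (H (inv2 (rinv_iso (X, w, Y))) (I (eval_word X w))) (concat_iso X w (rev_word w))),
     (X, [], X))"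

fun Seta :: "('o, 'a) word_arr \<Rightarrow> ('o, 'a, 'b) word_cell" where
  "Seta (X, w, Y) = ((Y, [], Y),
     V (inv2 (concat_iso Y (rev_word w) w)) (V (H (I (eval_word X w)) (rinv_iso (X, w, Y))) (eta B (eval_word X w))),
     (Y, rev_word w @ w, Y))"

definition SB :: "('o, ('o, 'a) word_arr, ('o, 'a, 'b) word_cell) bigroupoid" where
  "SB = \<lparr>Obj = Obj B, Arr = SArr, src = fst, tgt = (\<lambda>u. snd (snd u)), Cell = SCell, dom2 = fst,
     cod2 = (\<lambda>c. snd (snd c)), vcomp = Svcomp, vid = Svid, hcomp = Shcomp, hcomp2 = Shcomp2, idn = Sidn,
     rinv = Srinv, rinv2 = Srinv2, asc = Sasc, lun = Svid, run = Svid, eps = Seps, eta = Seta\<rparr>"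

lemma SB_simps[simp]:
  "Obj SB = Obj B" "Arr SB = SArr" "src SB = fst" "tgt SB = (\<lambda>u. snd (snd u))" "Cell SB = SCell"
  "dom2 SB = fst" "cod2 SB = (\<lambda>c. snd (snd c))" "vcomp SB = Svcomp" "vid SB = Svid" "hcomp SB = Shcomp"
  "hcomp2 SB = Shcomp2" "idn SB = Sidn" "rinv SB = Srinv" "rinv2 SB = Srinv2" "asc SB = Sasc"
  "lun SB = Svid" "run SB = Svid" "eps SB = Seps" "eta SB = Seta"
  by (simp_all add: SB_def)

lemma SArr_iff[simp]: "(X, w, Y) \<in> SArr \<longleftrightarrow> wf_word X w \<and> Y = word_end X w"
  by (simp add: SArr_def)

lemma SCell_iff[simp]: "((X, w, Y), b, (X', w', Y')) \<in> SCell \<longleftrightarrow>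
   wf_word X w \<and> Y = word_end X w \<and> wf_word X' w' \<and> Y' = word_end X' w' \<and> X = X' \<and> Y = Y' \<and>
   b \<in> Cell B \<and> d2 b = eval_word X w \<and> c2 b = eval_word X' w'"
  by (auto simp: SCell_def hom2_iff)

lemma SB_hom2E:
  assumes "c \<in> hom2 SB u v"
  obtains X w Y w' b where "u = (X, w, Y)" "v = (X, w', Y)" "c = (u, b, v)" "wf_word X w" "Y = word_end X w"
     "wf_word X w'" "Y = word_end X w'" "b \<in> Cell B" "d2 b = eval_word X w" "c2 b = eval_word X w'"
proof -
  obtain u' b v' where c: "c = (u', b, v')" by (cases c) auto
  obtain X w Y where u: "u = (X, w, Y)" by (cases u) auto
  obtain X' w' Y' where v: "v = (X', w', Y')" by (cases v) auto
  show ?thesis using assms c u v by (intro that[of X w Y w' b]) (auto simp: hom2_def)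
qed

lemma SB_homE:
  assumes "f \<in> hom SB X Y"
  obtains w where "f = (X, w, Y)" "wf_word X w" "Y = word_end X w"
  using assms by (cases f) (auto simp: hom_def)

lemma SB_hom_iff: "(X', w, Y') \<in> hom SB X Y \<longleftrightarrow> X' = X \<and> Y' = Y \<and> wf_word X w \<and> Y = word_end X w"
  by (auto simp: hom_def)

lemma rinv_iso_hom2:
  assumes "wf_word X w"
  shows "rinv_iso (X, w, word_end X w) \<in> hom2 B (rinv B (eval_word X w)) (eval_word (word_end X w) (rev_word w))"
proof (cases "rinv B (eval_word X w) = eval_word (word_end X w) (rev_word w)")
  case True
  then show ?thesis using assms by (simp add: rinv_iso_def hom2_iff)
next
  case False
  have "\<exists>\<beta>. \<beta> \<in> hom2 B (rinv B (eval_word X w)) (eval_word (word_end X w) (rev_word w))"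
    using isomorphic_rinv_eval_word[OF assms] by (auto simp: isomorphic_def hom2_iff)
  then show ?thesis using False by (simp add: rinv_iso_def) (rule someI_ex)
qed

lemma rinv_iso_cell[simp]: "wf_word X w \<Longrightarrow> Y = word_end X w \<Longrightarrow> rinv_iso (X, w, Y) \<in> Cell B"
  and dom2_rinv_iso[simp]: "wf_word X w \<Longrightarrow> Y = word_end X w \<Longrightarrow> d2 (rinv_iso (X, w, Y)) = rinv B (eval_word X w)"
  and cod2_rinv_iso[simp]: "wf_word X w \<Longrightarrow> Y = word_end X w \<Longrightarrow> c2 (rinv_iso (X, w, Y)) = eval_word Y (rev_word w)"
  using rinv_iso_hom2 hom2_iff by blast+

lemma wf_word_rev_word'[simp]: "wf_word X w \<Longrightarrow> Y = word_end X w \<Longrightarrow> wf_word Y (rev_word w)"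
  and word_end_rev_word'[simp]: "wf_word X w \<Longrightarrow> Y = word_end X w \<Longrightarrow> word_end Y (rev_word w) = X"
  by simp_all

lemma SB_vinverse:
  assumes "\<alpha> \<in> hom2 SB f g"
  shows "\<exists>\<beta>\<in>hom2 SB g f. vcomp SB \<beta> \<alpha> = vid SB f \<and> vcomp SB \<alpha> \<beta> = vid SB g"
proof -
  obtain X w Y w' b where h: "f = (X, w, Y)" "g = (X, w', Y)" "\<alpha> = (f, b, g)" "wf_word X w" "Y = word_end X w"
    "wf_word X w'" "Y = word_end X w'" "b \<in> Cell B" "d2 b = eval_word X w" "c2 b = eval_word X w'"
    using assms by (rule SB_hom2E)
  show ?thesis
    by (rule bexI[of _ "(g, inv2 b, f)"]) (use h in \<open>auto simp: hom2_def\<close>)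
qed

lemma SB_asc_natural:
  assumes a: "\<alpha> \<in> hom2 SB f f'" and b: "\<beta> \<in> hom2 SB g g'" and c: "\<gamma> \<in> hom2 SB h h'"
    and fg: "tgt SB f = src SB g" and gh: "tgt SB g = src SB h"
  shows "vcomp SB (asc SB h' g' f') (hcomp2 SB (hcomp2 SB \<gamma> \<beta>) \<alpha>)
    = vcomp SB (hcomp2 SB \<gamma> (hcomp2 SB \<beta> \<alpha>)) (asc SB h g f)"
proof -
  obtain X w1 Y w1' ma where A: "f = (X, w1, Y)" "f' = (X, w1', Y)" "\<alpha> = (f, ma, f')" "wf_word X w1" "Y = word_end X w1"
    "wf_word X w1'" "Y = word_end X w1'" "ma \<in> Cell B" "d2 ma = eval_word X w1" "c2 ma = eval_word X w1'"
    using a by (rule SB_hom2E)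
  obtain Y2 w2 Z w2' mb where Bb: "g = (Y2, w2, Z)" "g' = (Y2, w2', Z)" "\<beta> = (g, mb, g')" "wf_word Y2 w2" "Z = word_end Y2 w2"
    "wf_word Y2 w2'" "Z = word_end Y2 w2'" "mb \<in> Cell B" "d2 mb = eval_word Y2 w2" "c2 mb = eval_word Y2 w2'"
    using b by (rule SB_hom2E)
  obtain Z2 w3 W w3' mc where Cc: "h = (Z2, w3, W)" "h' = (Z2, w3', W)" "\<gamma> = (h, mc, h')" "wf_word Z2 w3" "W = word_end Z2 w3"
    "wf_word Z2 w3'" "W = word_end Z2 w3'" "mc \<in> Cell B" "d2 mc = eval_word Z2 w3" "c2 mc = eval_word Z2 w3'"
    using c by (rule SB_hom2E)
  have Y2: "Y2 = Y" using fg A Bb by simp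
  have Z2: "Z2 = Z" using gh Bb Cc by simp
  have "V (inv2 (concat_iso X w1' (w2' @ w3'))) (V (H (V (inv2 (concat_iso Y w2' w3')) (V (H mc mb) (concat_iso Y w2 w3))) ma) (concat_iso X w1 (w2 @ w3)))
     = V (inv2 (concat_iso X (w1' @ w2') w3')) (V (H mc (V (inv2 (concat_iso X w1' w2')) (V (H mb ma) (concat_iso X w1 w2)))) (concat_iso X (w1 @ w2) w3))"
  proof (rule conj_asc_natural[where Ea = "eval_word X w1" and Ea' = "eval_word X w1'" and Eb = "eval_word Y w2"
        and Eb' = "eval_word Y w2'" and Ec = "eval_word Z w3" and Ec' = "eval_word Z w3'"
        and Eabc = "eval_word X (w1 @ w2 @ w3)" and Ebc = "eval_word Y (w2 @ w3)" and Eab = "eval_word X (w1 @ w2)"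
        and Eabc' = "eval_word X (w1' @ w2' @ w3')" and Ebc' = "eval_word Y (w2' @ w3')" and Eab' = "eval_word X (w1' @ w2')"])
    show "V (asc B (eval_word Z w3) (eval_word Y w2) (eval_word X w1)) (V (H (concat_iso Y w2 w3) (I (eval_word X w1))) (concat_iso X w1 (w2 @ w3))) =
          V (H (I (eval_word Z w3)) (concat_iso X w1 w2)) (concat_iso X (w1 @ w2) w3)"
      using concat_iso_assoc[of X w1 w2 w3] A Bb Cc Y2 Z2 by simp
    show "V (asc B (eval_word Z w3') (eval_word Y w2') (eval_word X w1')) (V (H (concat_iso Y w2' w3') (I (eval_word X w1'))) (concat_iso X w1' (w2' @ w3'))) =
          V (H (I (eval_word Z w3')) (concat_iso X w1' w2')) (concat_iso X (w1' @ w2') w3')"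
      using concat_iso_assoc[of X w1' w2' w3'] A Bb Cc Y2 Z2 by simp
  qed (use A Bb Cc Y2 Z2 in simp_all)
  then show ?thesis using A Bb Cc Y2 Z2 by simp
qed

lemma SB_lun_natural:
  assumes "\<alpha> \<in> hom2 SB f g"
  shows "vcomp SB \<alpha> (lun SB f) = vcomp SB (lun SB g) (hcomp2 SB (vid SB (idn SB (tgt SB f))) \<alpha>)"
proof -
  obtain X w Y w' a where A: "f = (X, w, Y)" "g = (X, w', Y)" "\<alpha> = (f, a, g)" "wf_word X w" "Y = word_end X w"
    "wf_word X w'" "Y = word_end X w'" "a \<in> Cell B" "d2 a = eval_word X w" "c2 a = eval_word X w'"
    using assms by (rule SB_hom2E)
  show ?thesis using A lun_conjugate[of a] by (simp add: concat_iso_Nil_right)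
qed

lemma SB_run_natural:
  assumes "\<alpha> \<in> hom2 SB f g"
  shows "vcomp SB \<alpha> (run SB f) = vcomp SB (run SB g) (hcomp2 SB \<alpha> (vid SB (idn SB (src SB f))))"
proof -
  obtain X w Y w' a where A: "f = (X, w, Y)" "g = (X, w', Y)" "\<alpha> = (f, a, g)" "wf_word X w" "Y = word_end X w"
    "wf_word X w'" "Y = word_end X w'" "a \<in> Cell B" "d2 a = eval_word X w" "c2 a = eval_word X w'"
    using assms by (rule SB_hom2E)
  show ?thesis using A run_conjugate[of a] by simp
qed

lemma SB_eps_natural:
  assumes "\<alpha> \<in> hom2 SB f g"
  shows "vcomp SB (eps SB g) (hcomp2 SB (rinv2 SB \<alpha>) \<alpha>) = eps SB f"
proof -
  obtain X w Y w' a where A: "f = (X, w, Y)" "g = (X, w', Y)" "\<alpha> = (f, a, g)" "wf_word X w" "Y = word_end X w"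
    "wf_word X w'" "Y = word_end X w'" "a \<in> Cell B" "d2 a = eval_word X w" "c2 a = eval_word X w'"
    using assms by (rule SB_hom2E)
  have "V (V (eps B (eval_word X w')) (V (H (inv2 (rinv_iso (X, w', Y))) (I (eval_word X w'))) (concat_iso X w' (rev_word w'))))
      (V (inv2 (concat_iso X w' (rev_word w'))) (V (H (V (rinv_iso (X, w', Y)) (V (rinv2 B a) (inv2 (rinv_iso (X, w, Y))))) a) (concat_iso X w (rev_word w))))
     = V (eps B (eval_word X w)) (V (H (inv2 (rinv_iso (X, w, Y))) (I (eval_word X w))) (concat_iso X w (rev_word w)))"
    by (rule conj_eps_natural[where Fs = "eval_word Y (rev_word w)" and Gs = "eval_word Y (rev_word w')"]) (use A in simp_all)
  then show ?thesis using A by simp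
qed

lemma SB_eta_natural:
  assumes "\<alpha> \<in> hom2 SB f g"
  shows "vcomp SB (hcomp2 SB \<alpha> (rinv2 SB \<alpha>)) (eta SB f) = eta SB g"
proof -
  obtain X w Y w' a where A: "f = (X, w, Y)" "g = (X, w', Y)" "\<alpha> = (f, a, g)" "wf_word X w" "Y = word_end X w"
    "wf_word X w'" "Y = word_end X w'" "a \<in> Cell B" "d2 a = eval_word X w" "c2 a = eval_word X w'"
    using assms by (rule SB_hom2E)
  have "V (V (inv2 (concat_iso Y (rev_word w') w')) (V (H a (V (rinv_iso (X, w', Y)) (V (rinv2 B a) (inv2 (rinv_iso (X, w, Y)))))) (concat_iso Y (rev_word w) w)))
      (V (inv2 (concat_iso Y (rev_word w) w)) (V (H (I (eval_word X w)) (rinv_iso (X, w, Y))) (eta B (eval_word X w))))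
     = V (inv2 (concat_iso Y (rev_word w') w')) (V (H (I (eval_word X w')) (rinv_iso (X, w', Y))) (eta B (eval_word X w')))"
    by (rule conj_eta_natural[where Fs = "eval_word Y (rev_word w)" and Gs = "eval_word Y (rev_word w')"]) (use A in simp_all)
  then show ?thesis using A by simp
qed

lemma SB_zigzag:
  assumes "f \<in> Arr SB"
  shows "vcomp SB (run SB f) (vcomp SB (hcomp2 SB (vid SB f) (eps SB f))
    (vcomp SB (asc SB f (rinv SB f) f) (hcomp2 SB (eta SB f) (vid SB f)))) = lun SB f"
proof -
  obtain X w Y where A: "f = (X, w, Y)" "wf_word X w" "Y = word_end X w"
    using assms by (cases f) auto
  have assoc: "V (asc B (eval_word X w) (eval_word Y (rev_word w)) (eval_word X w))
      (V (H (concat_iso Y (rev_word w) w) (I (eval_word X w))) (concat_iso X w (rev_word w @ w)))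
    = V (H (I (eval_word X w)) (concat_iso X w (rev_word w))) (concat_iso X (w @ rev_word w) w)"
  proof -
    have "wf_word (word_end X w) (rev_word w)" "wf_word (word_end (word_end X w) (rev_word w)) w"
      using A(2) by simp_all
    from concat_iso_assoc[OF A(2) this] show ?thesis
      by (simp only: A(3)[symmetric] word_end_rev_word'[OF A(2) A(3)])
  qed
  have "V (run B (eval_word X w)) (V (H (I (eval_word X w)) (V (eps B (eval_word X w)) (V (H (inv2 (rinv_iso (X, w, Y))) (I (eval_word X w))) (concat_iso X w (rev_word w)))))
     (V (concat_iso X (w @ rev_word w) w) (V (inv2 (concat_iso X w (rev_word w @ w))) (V (H (V (inv2 (concat_iso Y (rev_word w) w)) (V (H (I (eval_word X w)) (rinv_iso (X, w, Y))) (eta B (eval_word X w)))) (I (eval_word X w))) (inv2 (lun B (eval_word X w)))))))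
     = I (eval_word X w)"
    by (rule conj_zigzag[where Fs = "eval_word Y (rev_word w)" and EA = "eval_word X (w @ rev_word w)"
          and EB = "eval_word Y (rev_word w @ w)" and EC = "eval_word X (w @ rev_word w @ w)", OF _ _ _ _ _ _ _ _ _ _ _ _ _ _ _ _ assoc])
      (use A in simp_all)
  then show ?thesis using A by (simp add: concat_iso_Nil_right vcomp_assoc)
qed

lemma SB_bigroupoid_context: "bigroupoid_context SB"
  apply (unfold_locales; (simp only: split_paired_all)?)
  subgoal by (auto simp: split_paired_all)
  subgoal by (auto simp: split_paired_all)
  subgoal by (auto simp: split_paired_all hom2_def)
  subgoal by (auto elim!: SB_hom2E simp: hom2_def)
  subgoal by (auto elim!: SB_hom2E simp: vcomp_assoc)
  subgoal by (auto elim!: SB_hom2E)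
  subgoal by (rule SB_vinverse)
  subgoal by (auto elim!: SB_homE simp: SB_hom_iff)
  subgoal by (auto elim!: SB_hom2E simp: hom2_def)
  subgoal by (auto simp: split_paired_all)
  subgoal by (auto elim!: SB_hom2E simp: interchange vcomp_assoc)
  subgoal by (auto simp: SB_hom_iff)
  subgoal by (auto elim!: SB_homE simp: SB_hom_iff)
  subgoal by (auto elim!: SB_hom2E simp: hom2_def)
  subgoal by (auto simp: split_paired_all)
  subgoal by (auto elim!: SB_hom2E simp: rinv2_vcomp vcomp_assoc)
  subgoal by (auto simp: split_paired_all hom2_def)
  subgoal by (rule SB_asc_natural)
  subgoal by (auto simp: split_paired_all hom2_def)
  subgoal by (rule SB_lun_natural)
  subgoal by (auto simp: split_paired_all hom2_def)
  subgoal by (rule SB_run_natural)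
  subgoal by (auto simp: split_paired_all hom2_def)
  subgoal by (rule SB_eps_natural)
  subgoal by (auto simp: split_paired_all hom2_def)
  subgoal by (rule SB_eta_natural)
  subgoal by (auto simp: split_paired_all)
  subgoal by (auto simp: split_paired_all)
  subgoal by (rule SB_zigzag)
  done

lemma SB_au_bigroupoid: "au_bigroupoid SB"
  using SB_bigroupoid_context unfolding au_bigroupoid_def bigroupoid_context_iff by auto

section \<open>The biequivalences\<close>

definition Emor :: "('o, ('o, 'a) word_arr, ('o, 'a, 'b) word_cell, 'o, 'a, 'b) bmorph" where
  "Emor = \<lparr>F0 = id, F1 = Eval, F2 = (\<lambda>c. fst (snd c)), phi = (\<lambda>g f. inv2 (Sconcat_iso f g)),
     phi0 = (\<lambda>X. I (idn B X)), phiI = rinv_iso\<rparr>"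

lemma Emor_simps[simp]:
  "F0 Emor = id" "F1 Emor = Eval" "F2 Emor = (\<lambda>c. fst (snd c))" "phi Emor = (\<lambda>g f. inv2 (Sconcat_iso f g))"
  "phi0 Emor = (\<lambda>X. I (idn B X))" "phiI Emor = rinv_iso"
  by (simp_all add: Emor_def)

lemma Emor_asc_coherence:
  assumes f: "f \<in> Arr SB" and g: "g \<in> Arr SB" and h: "h \<in> Arr SB"
    and fg: "tgt SB f = src SB g" and gh: "tgt SB g = src SB h"
  shows "vcomp B (F2 Emor (asc SB h g f)) (vcomp B (phi Emor (hcomp SB h g) f) (hcomp2 B (phi Emor h g) (vid B (F1 Emor f))))
    = vcomp B (phi Emor h (hcomp SB g f)) (vcomp B (hcomp2 B (vid B (F1 Emor h)) (phi Emor g f)) (asc B (F1 Emor h) (F1 Emor g) (F1 Emor f)))"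
proof -
  obtain X w1 Y where F: "f = (X, w1, Y)" "wf_word X w1" "Y = word_end X w1" using f by (cases f) auto
  obtain w2 Z where G: "g = (Y, w2, Z)" "wf_word Y w2" "Z = word_end Y w2" using g fg F by (cases g) auto
  obtain w3 W where Hh: "h = (Z, w3, W)" "wf_word Z w3" "W = word_end Z w3" using h gh G by (cases h) auto
  have assoc: "V (asc B (eval_word Z w3) (eval_word Y w2) (eval_word X w1)) (V (H (concat_iso Y w2 w3) (I (eval_word X w1))) (concat_iso X w1 (w2 @ w3)))
     = V (H (I (eval_word Z w3)) (concat_iso X w1 w2)) (concat_iso X (w1 @ w2) w3)"
    using concat_iso_assoc[of X w1 w2 w3] F G Hh by simp
  have "V (inv2 (concat_iso X w1 (w2 @ w3))) (inv2 (H (concat_iso Y w2 w3) (I (eval_word X w1))))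
    = V (inv2 (concat_iso X (w1 @ w2) w3)) (V (inv2 (H (I (eval_word Z w3)) (concat_iso X w1 w2))) (asc B (eval_word Z w3) (eval_word Y w2) (eval_word X w1)))"
    by (rule inv2_coherence[OF _ _ _ _ _ _ _ _ _ assoc]) (use F G Hh in simp_all)
  then show ?thesis using F G Hh by (simp add: inv2_hcomp2)
qed

lemma Emor_eps_coherence:
  assumes "f \<in> Arr SB"
  shows "vcomp B (F2 Emor (eps SB f)) (vcomp B (phi Emor (rinv SB f) f) (hcomp2 B (phiI Emor f) (vid B (F1 Emor f))))
    = vcomp B (phi0 Emor (src SB f)) (eps B (F1 Emor f))"
proof -
  obtain X w Y where F: "f = (X, w, Y)" "wf_word X w" "Y = word_end X w" using assms by (cases f) auto
  let ?p = "rinv_iso (X, w, Y)" and ?E = "eval_word X w"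
  have "V (H (inv2 ?p) (I ?E)) (H ?p (I ?E)) = I (hc (rinv B ?E) ?E)"
    using F interchange[of "I ?E" "I ?E" ?p "inv2 ?p"] by simp
  then show ?thesis using F by (simp add: vcomp_assoc)
qed

lemma Emor_bmorphism: "bmorphism SB B Emor"
  unfolding bmorphism_def
  apply (intro conjI)
  subgoal by simp
  subgoal by (auto elim!: SB_homE simp: hom_iff)
  subgoal by (auto elim!: SB_hom2E simp: hom2_iff)
  subgoal by (auto simp: split_paired_all)
  subgoal by (auto elim!: SB_hom2E)
  subgoal by (auto simp: split_paired_all hom2_iff)
  subgoal by (auto elim!: SB_hom2E simp: vcomp_assoc)
  subgoal by (simp add: hom2_iff)
  subgoal by (auto simp: split_paired_all hom2_iff)
  subgoal by (auto elim!: SB_hom2E simp: vcomp_assoc)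
  subgoal using Emor_asc_coherence by blast
  subgoal by (auto simp: split_paired_all)
  subgoal by (auto simp: split_paired_all concat_iso_Nil_right)
  subgoal using Emor_eps_coherence by blast
  subgoal by (auto simp: split_paired_all vcomp_assoc)
  done

definition letter_word :: "'a \<Rightarrow> ('o, 'a) word_arr" where
  "letter_word f = (s f, [(f, True)], t f)"

definition Smor :: "('o, 'a, 'b, 'o, ('o, 'a) word_arr, ('o, 'a, 'b) word_cell) bmorph" where
  "Smor = \<lparr>F0 = id, F1 = letter_word, F2 = (\<lambda>\<alpha>. (letter_word (d2 \<alpha>), \<alpha>, letter_word (c2 \<alpha>))),
     phi = (\<lambda>g f. ((s f, [(f, True), (g, True)], t g), I (hc g f), (s f, [(hc g f, True)], t g))),
     phi0 = (\<lambda>X. ((X, [], X), I (idn B X), (X, [(idn B X, True)], X))),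
     phiI = (\<lambda>f. ((t f, [(f, False)], s f), I (rinv B f), (t f, [(rinv B f, True)], s f)))\<rparr>"

lemma Smor_simps[simp]:
  "F0 Smor = id" "F1 Smor = letter_word" "F2 Smor = (\<lambda>\<alpha>. (letter_word (d2 \<alpha>), \<alpha>, letter_word (c2 \<alpha>)))"
  "phi Smor = (\<lambda>g f. ((s f, [(f, True), (g, True)], t g), I (hc g f), (s f, [(hc g f, True)], t g)))"
  "phi0 Smor = (\<lambda>X. ((X, [], X), I (idn B X), (X, [(idn B X, True)], X)))"
  "phiI Smor = (\<lambda>f. ((t f, [(f, False)], s f), I (rinv B f), (t f, [(rinv B f, True)], s f)))"
  by (simp_all add: Smor_def)

lemma rinv_iso_letter_word: "f \<in> Arr B \<Longrightarrow> X = s f \<Longrightarrow> Y = t f \<Longrightarrow> rinv_iso (X, [(f, True)], Y) = I (rinv B f)"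
  by (simp add: rinv_iso_def rev_word_def)

lemma Smor_bmorphism: "bmorphism B SB Smor"
  unfolding bmorphism_def
  apply (intro conjI)
  subgoal by simp
  subgoal by (auto simp: letter_word_def hom_iff SB_hom_iff)
  subgoal by (auto simp: letter_word_def hom2_iff hom2_def)
  subgoal by (auto simp: letter_word_def)
  subgoal by (auto simp: letter_word_def hom2_iff)
  subgoal by (auto simp: hom2_def letter_word_def)
  subgoal by (auto simp: letter_word_def hom2_iff)
  subgoal by (auto simp: hom2_def letter_word_def)
  subgoal by (auto simp: hom2_def letter_word_def rev_word_def)
  subgoal by (auto simp: letter_word_def hom2_iff rinv_iso_letter_word rev_word_def)
  subgoal by (auto simp: letter_word_def)
  subgoal by (auto simp: letter_word_def)
  subgoal by (auto simp: letter_word_def)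
  subgoal by (auto simp: letter_word_def rinv_iso_letter_word rev_word_def)
  subgoal by (auto simp: letter_word_def rinv_iso_letter_word rev_word_def)
  done

lemma Emor_hom_equivalence: assumes X: "X \<in> Obj B" and X': "X' \<in> Obj B" shows "hom_equivalence SB B Emor X X'"
  unfolding hom_equivalence_def
proof (intro exI conjI)
  let ?G1 = "\<lambda>h. (X, [(h, True)], X')"
  let ?G2 = "\<lambda>\<gamma>. (?G1 (d2 \<gamma>), \<gamma>, ?G1 (c2 \<gamma>))"
  let ?u = "\<lambda>f. (f, I (Eval f), ?G1 (Eval f))"
  let ?c = "\<lambda>h. I h"
  show "\<forall>h\<in>hom B (F0 Emor X) (F0 Emor X'). ?G1 h \<in> hom SB X X'" by (auto simp: hom_iff SB_hom_iff)
  show "\<forall>h h' \<gamma>. h \<in> hom B (F0 Emor X) (F0 Emor X') \<longrightarrow> \<gamma> \<in> hom2 B h h' \<longrightarrow> ?G2 \<gamma> \<in> hom2 SB (?G1 h) (?G1 h')"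
    by (auto simp: hom_iff hom2_iff hom2_def)
  show "\<forall>h\<in>hom B (F0 Emor X) (F0 Emor X'). ?G2 (vid B h) = vid SB (?G1 h)" by (auto simp: hom_iff)
  show "\<forall>h h' h'' \<gamma> \<delta>. h \<in> hom B (F0 Emor X) (F0 Emor X') \<longrightarrow> \<gamma> \<in> hom2 B h h' \<longrightarrow> \<delta> \<in> hom2 B h' h'' \<longrightarrow>
      ?G2 (vcomp B \<delta> \<gamma>) = vcomp SB (?G2 \<delta>) (?G2 \<gamma>)" by (auto simp: hom_iff hom2_iff)
  show "\<forall>f\<in>hom SB X X'. ?u f \<in> hom2 SB f (?G1 (F1 Emor f))" by (auto elim!: SB_homE simp: hom2_def)
  show "\<forall>f g \<alpha>. f \<in> hom SB X X' \<longrightarrow> \<alpha> \<in> hom2 SB f g \<longrightarrow>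
      vcomp SB (?G2 (F2 Emor \<alpha>)) (?u f) = vcomp SB (?u g) \<alpha>" by (auto elim!: SB_hom2E)
  show "\<forall>h\<in>hom B (F0 Emor X) (F0 Emor X'). ?c h \<in> hom2 B (F1 Emor (?G1 h)) h" by (auto simp: hom_iff hom2_iff)
  show "\<forall>h h' \<gamma>. h \<in> hom B (F0 Emor X) (F0 Emor X') \<longrightarrow> \<gamma> \<in> hom2 B h h' \<longrightarrow>
      vcomp B \<gamma> (?c h) = vcomp B (?c h') (F2 Emor (?G2 \<gamma>))" by (auto simp: hom_iff hom2_iff)
qed

lemma Smor_hom_equivalence: assumes X: "X \<in> Obj B" and X': "X' \<in> Obj B" shows "hom_equivalence B SB Smor X X'"
  unfolding hom_equivalence_def
proof (intro exI conjI)
  let ?G1 = "Eval"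
  let ?G2 = "\<lambda>c. fst (snd c)"
  let ?u = "\<lambda>f. I f"
  let ?c = "\<lambda>h. (letter_word (Eval h), I (Eval h), h)"
  show "\<forall>h\<in>hom SB (F0 Smor X) (F0 Smor X'). ?G1 h \<in> hom B X X'" by (auto elim!: SB_homE simp: hom_iff)
  show "\<forall>h h' \<gamma>. h \<in> hom SB (F0 Smor X) (F0 Smor X') \<longrightarrow> \<gamma> \<in> hom2 SB h h' \<longrightarrow> ?G2 \<gamma> \<in> hom2 B (?G1 h) (?G1 h')"
    by (auto elim!: SB_hom2E simp: hom2_iff)
  show "\<forall>h\<in>hom SB (F0 Smor X) (F0 Smor X'). ?G2 (vid SB h) = vid B (?G1 h)" by (auto elim!: SB_homE)
  show "\<forall>h h' h'' \<gamma> \<delta>. h \<in> hom SB (F0 Smor X) (F0 Smor X') \<longrightarrow> \<gamma> \<in> hom2 SB h h' \<longrightarrow> \<delta> \<in> hom2 SB h' h'' \<longrightarrow>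
      ?G2 (vcomp SB \<delta> \<gamma>) = vcomp B (?G2 \<delta>) (?G2 \<gamma>)" by (auto elim!: SB_hom2E)
  show "\<forall>f\<in>hom B X X'. ?u f \<in> hom2 B f (?G1 (F1 Smor f))" by (auto simp: hom_iff hom2_iff letter_word_def)
  show "\<forall>f g \<alpha>. f \<in> hom B X X' \<longrightarrow> \<alpha> \<in> hom2 B f g \<longrightarrow>
      vcomp B (?G2 (F2 Smor \<alpha>)) (?u f) = vcomp B (?u g) \<alpha>" by (auto simp: hom_iff hom2_iff)
  show "\<forall>h\<in>hom SB (F0 Smor X) (F0 Smor X'). ?c h \<in> hom2 SB (F1 Smor (?G1 h)) h" by (auto elim!: SB_homE simp: hom2_def letter_word_def)
  show "\<forall>h h' \<gamma>. h \<in> hom SB (F0 Smor X) (F0 Smor X') \<longrightarrow> \<gamma> \<in> hom2 SB h h' \<longrightarrow>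
      vcomp SB \<gamma> (?c h) = vcomp SB (?c h') (F2 Smor (?G2 \<gamma>))" by (auto elim!: SB_hom2E simp: letter_word_def)
qed

lemma Emor_weak_equivalence: "weak_equivalence SB B Emor"
  unfolding weak_equivalence_def
proof (intro conjI ballI)
  show "bmorphism SB B Emor" by (rule Emor_bmorphism)
next
  fix Y assume Y: "Y \<in> Obj B"
  have "idn B Y \<in> hom B Y Y" using Y by (simp add: hom_iff)
  then show "\<exists>X\<in>Obj SB. hom B Y (F0 Emor X) \<noteq> {}"
    using Y by (intro bexI[of _ Y]) auto
next
  fix X X' assume "X \<in> Obj SB" "X' \<in> Obj SB"
  then show "hom_equivalence SB B Emor X X'" by (intro Emor_hom_equivalence) auto
qed

lemma Smor_weak_equivalence: "weak_equivalence B SB Smor"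
  unfolding weak_equivalence_def
proof (intro conjI ballI)
  show "bmorphism B SB Smor" by (rule Smor_bmorphism)
next
  fix Y assume Y: "Y \<in> Obj SB"
  have "(Y, [], Y) \<in> hom SB Y Y" using Y by (simp add: SB_hom_iff)
  then show "\<exists>X\<in>Obj B. hom SB Y (F0 Smor X) \<noteq> {}"
    using Y by (intro bexI[of _ Y]) auto
next
  fix X X' assume "X \<in> Obj B" "X' \<in> Obj B"
  then show "hom_equivalence B SB Smor X X'" by (intro Smor_hom_equivalence) auto
qed

end

theorem lemmaB2:
  fixes B :: "('o, 'a, 'b) bigroupoid"
  assumes "bigroupoid B"
  shows "\<exists>(SB :: ('o, 'o \<times> ('a \<times> bool) list \<times> 'o,
                  ('o \<times> ('a \<times> bool) list \<times> 'o) \<times> 'b \<times> ('o \<times> ('a \<times> bool) list \<times> 'o)) bigroupoid)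
            E S.
           au_bigroupoid SB \<and> weak_equivalence SB B E \<and> weak_equivalence B SB S"
proof -
  interpret bigroupoid_context B
    using assms by (simp add: bigroupoid_context_iff)
  show ?thesis using SB_au_bigroupoid Emor_weak_equivalence Smor_weak_equivalence by blast
qed

end
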